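(* Let ${\tt l}_1\ge 3$, ${\tt l}_2\ge 1$, ${\tt r}$ be positive integers with positive design rate $1-\frac{{\tt l}_1+{\tt l}_2}{{\tt r}}>0$. Consider the regular two edge type LDPC ensemble $\{{\tt l}_1,{\tt l}_2,{\tt r},{\tt r}\}$ of blocklength $n$, let $N(n,\omega n)$ be the number of stopping sets of size $\omega n$ of a randomly chosen code from this ensemble, and let $\mathbb{E}(N(n,\omega n))$ be its average over the ensemble. Then for every $\omega\in(0,1)$ the growth rate $\lim_{n\to\infty}\frac{1}{n}\ln \mathbb{E}(N(n,\omega n))$ (along $n$ for which the quantities are integral) equals the growth rate $\lim_{n\to\infty}\frac{1}{n}\ln \mathbb{E}(N'(n,\omega n))$ of the average stopping set distribution $N'$ of the standard regular $\{{\tt l}_1+{\tt l}_2,{\tt r}\}$ LDPC ensemble. In particular, the minimum stopping set distance of the $\{{\tt l}_1,{\tt l}_2,{\tt r},{\tt r}\}$ ensemble grows linearly in $n$: there exists $\omega^*>0$ such that the probability that a randomly chosen code from the ensemble has a nonempty stopping set of size at most $\omega^* n$ tends to $0$ as $n\to\infty$.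
   Context: The regular two edge type LDPC ensemble $\{{\tt l}_1,{\tt l}_2,{\tt r}_1,{\tt r}_2\}$ of blocklength $n$ consists of all bipartite graphs (multiple edges between a variable node and a check node allowed) with $n$ variable nodes, each connected to ${\tt l}_i$ check nodes of type $i$ (via ${\tt l}_i$ edges of type $i$), and $\frac{{\tt l}_i n}{{\tt r}_i}$ check nodes of type $i$, each of degree ${\tt r}_i$, $i\in\{1,2\}$; a random code is obtained by connecting the type-$i$ edge sockets of variable and check nodes via a uniformly random permutation, independently for $i=1,2$. The standard regular $\{{\tt l},{\tt r}\}$ LDPC ensemble is the analogous single edge type ensemble (variable degree ${\tt l}$, check degree ${\tt r}$, uniformly random socket permutation). A stopping set of a code is a subset $S$ of the variable nodes such that every check node adjacent to $S$ is connected to $S$ at least twice. *)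

theory Defs
  imports "HOL-Analysis.Analysis" "HOL-Combinatorics.Permutations"
begin

text \<open>For one edge type with variable degree l, check degree r and
  blocklength n there are l*n variable sockets and l*n check sockets, both numbered
  0..<l*n. Variable socket k belongs to variable node k div l, check socket j belongs
  to check node j div r (so there are l*n div r check nodes). A graph is given by a
  permutation p of the sockets {..<l*n}: variable socket k is joined to check socket p k.
  Multiple edges are allowed automatically.\<close>

definition socket_perms :: "nat \<Rightarrow> (nat \<Rightarrow> nat) set" where
  "socket_perms m = {p. p permutes {..<m}}"

definition edges_to :: "nat \<Rightarrow> nat \<Rightarrow> nat \<Rightarrow> (nat \<Rightarrow> nat) \<Rightarrow> nat set \<Rightarrow> nat \<Rightarrow> nat" where
  "edges_to l r n p S c = card {k \<in> {..<l*n}. k div l \<in> S \<and> p k div r = c}"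

definition stopping1 :: "nat \<Rightarrow> nat \<Rightarrow> nat \<Rightarrow> (nat \<Rightarrow> nat) \<Rightarrow> nat set \<Rightarrow> bool" where
  "stopping1 l r n p S \<longleftrightarrow> S \<subseteq> {..<n} \<and> (\<forall>c < l*n div r. edges_to l r n p S c \<noteq> 1)"

text \<open>Stopping set for the two edge type {l1,l2,r1,r2} ensemble graph given by (p1,p2);
  type-1 and type-2 check nodes are distinct nodes.\<close>
definition stopping2 :: "nat \<Rightarrow> nat \<Rightarrow> nat \<Rightarrow> nat \<Rightarrow> nat \<Rightarrow> (nat \<Rightarrow> nat) \<Rightarrow> (nat \<Rightarrow> nat)
    \<Rightarrow> nat set \<Rightarrow> bool" where
  "stopping2 l1 l2 r1 r2 n p1 p2 S \<longleftrightarrow> S \<subseteq> {..<n}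
     \<and> (\<forall>c < l1*n div r1. edges_to l1 r1 n p1 S c \<noteq> 1)
     \<and> (\<forall>c < l2*n div r2. edges_to l2 r2 n p2 S c \<noteq> 1)"

definition avg_N1 :: "nat \<Rightarrow> nat \<Rightarrow> nat \<Rightarrow> nat \<Rightarrow> real" where
  "avg_N1 l r n m =
     (\<Sum>p\<in>socket_perms (l*n). real (card {S. stopping1 l r n p S \<and> card S = m}))
     / real (card (socket_perms (l*n)))"

definition avg_N2 :: "nat \<Rightarrow> nat \<Rightarrow> nat \<Rightarrow> nat \<Rightarrow> nat \<Rightarrow> nat \<Rightarrow> real" where
  "avg_N2 l1 l2 r1 r2 n m =
     (\<Sum>(p1,p2)\<in>socket_perms (l1*n) \<times> socket_perms (l2*n).
         real (card {S. stopping2 l1 l2 r1 r2 n p1 p2 S \<and> card S = m}))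
     / real (card (socket_perms (l1*n)) * card (socket_perms (l2*n)))"

definition prob_small_stop2 :: "nat \<Rightarrow> nat \<Rightarrow> nat \<Rightarrow> nat \<Rightarrow> nat \<Rightarrow> real \<Rightarrow> real" where
  "prob_small_stop2 l1 l2 r1 r2 n w =
     real (card {(p1,p2)\<in>socket_perms (l1*n) \<times> socket_perms (l2*n).
          \<exists>S. S \<noteq> {} \<and> real (card S) \<le> w * real n \<and> stopping2 l1 l2 r1 r2 n p1 p2 S})
     / real (card (socket_perms (l1*n)) * card (socket_perms (l2*n)))"

text \<open>Filter: n \<rightarrow> \<infinity> along blocklengths for which the numbers of check nodes are integral.\<close>
definition admissible_n :: "nat \<Rightarrow> nat \<Rightarrow> nat \<Rightarrow> nat \<Rightarrow> nat filter" where
  "admissible_n l1 l2 r1 r2 = inf at_top (principal {n. r1 dvd l1*n \<and> r2 dvd l2*n})"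

end

theory Submission
  imports Defs
begin

text \<open>
  By symmetry of the random socket permutations, the average number of stopping sets of size m
  factorises: for a fixed set of m variable nodes and each edge type i, the l_i m sockets of the
  set are mapped to a uniformly random (l_i m)-subset of the check sockets, so
  E N(n, m) = C(n, m) * prod_i T(r_i, K_i, l_i m) / C(l_i n, l_i m), where T(r, K, e) counts the
  e-subsets of K blocks of r sockets that meet no block exactly once.

  Both T(r, -, -) and the binomial coefficient are supermultiplicative in (size, weight), so a
  two-parameter Fekete argument gives growth rates psi_T and psi_B along rays E / N -> rho. The
  exponent of the factor of an edge type is therefore (l / r) psi_T(r w) - l psi_B(w), which is
  linear in l: splitting l_1 + l_2 edges into two types with the same check degree does not change
  the growth rate.

  For the linear minimum distance, a set meeting no block exactly once lies in the sockets of at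
  most e / 2 blocks. This gives E N(n, s) <= (D sqrt (s / n))^s when l_1 >= 3, and summing over
  1 <= s <= w* n bounds the probability of a small stopping set by O(1 / sqrt n).
\<close>

section \<open>Supermultiplicative counting functions\<close>

lemma abs_sub_mult_le:
  fixes x y \<rho> \<eta> :: real
  assumes "0 < y" "\<bar>x / y - \<rho>\<bar> < \<eta>"
  shows "\<bar>x - \<rho> * y\<bar> \<le> \<eta> * y"
proof -
  have "x - \<rho> * y = (x / y - \<rho>) * y" using assms(1) by (simp add: field_simps)
  then have "\<bar>x - \<rho> * y\<bar> = \<bar>x / y - \<rho>\<bar> * y" using assms(1) by (simp add: abs_mult)
  then show ?thesis using assms by (simp add: mult_right_mono)
qed

lemma eventually_ge_of_nat_filterlim:
  assumes "filterlim f at_top F"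
  shows "eventually (\<lambda>x. T \<le> real (f x)) F"
  using filterlim_compose[OF filterlim_real_sequentially assms] unfolding filterlim_at_top by blast

text \<open>Removing s copies of a point (N0, E0) near the ray E = \<rho> N from a point (N, E) near the same
  ray leaves a point (N', E') with 2 \<le> E' \<le> d N', provided the copies use at most (1 - \<delta>) N of
  the size: the slack \<delta> N absorbs the accumulated deviations from the ray.\<close>

lemma remainder_bounds:
  fixes \<rho> \<delta> d N N0 E E0 s :: real
  defines "\<eta> \<equiv> \<delta> * min \<rho> (d - \<rho>) / 4"
  assumes \<rho>: "0 < \<rho>" "\<rho> < d" and \<delta>: "0 < \<delta>" "\<delta> < 1"
    and s: "0 \<le> s" "s * N0 \<le> (1 - \<delta>) * N"
    and dev: "\<bar>E0 - \<rho> * N0\<bar> \<le> \<eta> * N0" "\<bar>E - \<rho> * N\<bar> \<le> \<eta> * N" and N: "4 / (\<rho> * \<delta>) \<le> N"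
  shows "2 \<le> E - s * E0" "E - s * E0 \<le> d * (N - s * N0)"
proof -
  define m where "m = min \<rho> (d - \<rho>)"
  define R where "R = N - s * N0"
  have m: "0 < m" "m \<le> \<rho>" "m \<le> d - \<rho>" using \<rho> unfolding m_def by auto
  have "0 < 4 / (\<rho> * \<delta>)" using \<rho> \<delta> by simp
  then have N0: "0 \<le> N" using N by linarith
  have "4 \<le> \<rho> * (\<delta> * N)" using N \<rho> \<delta> by (simp add: pos_divide_le_eq ac_simps)
  moreover have R: "\<delta> * N \<le> R" using s unfolding R_def by (simp add: algebra_simps)
  ultimately have "4 \<le> \<rho> * R" using mult_left_mono[OF R, of \<rho>] \<rho> by linarith
  have "0 \<le> \<delta> * N" using \<delta> N0 by simp
  then have R0: "0 \<le> R" using R by linarith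
  have \<eta>0: "0 \<le> \<eta>" using \<delta> m unfolding \<eta>_def m_def[symmetric] by simp
  have "(1 - \<delta>) * N \<le> N" using \<delta> N0 by (simp add: mult_left_le_one_le)
  then have "s * N0 \<le> N" using s by linarith
  then have "s * (\<eta> * N0) \<le> \<eta> * N" using mult_left_mono[OF _ \<eta>0] by (simp add: mult.left_commute)
  moreover have "\<bar>s * E0 - \<rho> * (s * N0)\<bar> \<le> s * (\<eta> * N0)"
  proof -
    have "s * E0 - \<rho> * (s * N0) = s * (E0 - \<rho> * N0)" by (simp add: algebra_simps)
    then have "\<bar>s * E0 - \<rho> * (s * N0)\<bar> = s * \<bar>E0 - \<rho> * N0\<bar>" using s(1) by (simp add: abs_mult)
    then show ?thesis using dev(1) s(1) by (simp add: mult_left_mono)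
  qed
  ultimately have "\<bar>(E - s * E0) - \<rho> * R\<bar> \<le> 2 * \<eta> * N" using dev(2) unfolding R_def by argo
  also have "2 * \<eta> * N = m * (\<delta> * N) / 2" unfolding \<eta>_def m_def by simp
  also have "\<dots> \<le> m * R / 2" using R m by (simp add: mult_left_mono)
  finally have "\<bar>(E - s * E0) - \<rho> * R\<bar> \<le> m * R / 2" .
  then have dev_R: "\<rho> * R - m * R / 2 \<le> E - s * E0" "E - s * E0 \<le> \<rho> * R + m * R / 2"
    by linarith+
  have "m * R \<le> \<rho> * R" "m * R \<le> (d - \<rho>) * R" "0 \<le> m * R"
    using m R0 by (simp_all add: mult_right_mono)
  then show "2 \<le> E - s * E0" using dev_R \<open>4 \<le> \<rho> * R\<close> by linarith
  have "E - s * E0 \<le> \<rho> * R + (d - \<rho>) * R" using dev_R \<open>m * R \<le> (d - \<rho>) * R\<close> by linarith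
  then show "E - s * E0 \<le> d * (N - s * N0)" unfolding R_def by (simp add: algebra_simps)
qed

locale supermultiplicative_count =
  fixes c :: "nat \<Rightarrow> nat \<Rightarrow> nat" and d :: nat and b :: real
  assumes supermult: "c N1 E1 * c N2 E2 \<le> c (N1 + N2) (E1 + E2)"
    and one_le: "E = 0 \<or> 2 \<le> E \<Longrightarrow> E \<le> d * N \<Longrightarrow> 1 \<le> c N E"
    and le_power: "real (c N E) \<le> b ^ N"
begin

lemma power_le: "c N E ^ s \<le> c (s * N) (s * E)"
proof (induction s)
  case 0
  then show ?case using one_le[of 0 0] by simp
next
  case (Suc s)
  have "c N E ^ Suc s \<le> c N E * c (s * N) (s * E)" using Suc by simp
  also have "\<dots> \<le> c (N + s * N) (E + s * E)" by (rule supermult)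
  finally show ?case by simp
qed

lemma one_le_base: "1 \<le> b"
  using one_le[of 0 1] le_power[of 1 0] by simp

lemma power_le_of_remainder:
  assumes "s * N0 \<le> N" "s * E0 \<le> E"
    and "E - s * E0 = 0 \<or> 2 \<le> E - s * E0" "E - s * E0 \<le> d * (N - s * N0)"
  shows "c N0 E0 ^ s \<le> c N E"
proof -
  have "c N0 E0 ^ s \<le> c (s * N0) (s * E0)" by (rule power_le)
  also have "\<dots> \<le> c (s * N0) (s * E0) * c (N - s * N0) (E - s * E0)" using one_le[OF assms(3,4)] by simp
  also have "\<dots> \<le> c N E" using supermult[of "s * N0" "s * E0" "N - s * N0" "E - s * E0"] assms(1,2) by simp
  finally show ?thesis .
qed

lemma ln_ge_copies:
  fixes \<rho> \<delta> \<eta> :: real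
  assumes \<rho>: "0 < \<rho>" "\<rho> < d" and \<delta>: "0 < \<delta>" "\<delta> < 1"
    and \<eta>: "\<eta> = \<delta> * min \<rho> (d - \<rho>) / 4"
    and N0: "0 < N0" "1 \<le> c N0 E0" "\<bar>real E0 / real N0 - \<rho>\<bar> < \<eta>"
    and N: "4 / (\<rho> * \<delta>) \<le> N" "\<bar>real E / real N - \<rho>\<bar> < \<eta>"
  shows "real (nat \<lfloor>(1 - \<delta>) * real N / real N0\<rfloor>) * ln (c N0 E0) \<le> ln (c N E)"
proof -
  define s where "s = nat \<lfloor>(1 - \<delta>) * real N / real N0\<rfloor>"
  have "0 < 4 / (\<rho> * \<delta>)" using \<rho> \<delta> by simp
  then have "0 < N" using N(1) by linarith
  then have dev: "\<bar>E - \<rho> * N\<bar> \<le> \<eta> * N" "\<bar>E0 - \<rho> * N0\<bar> \<le> \<eta> * N0"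
    using N(2) N0(1,3) abs_sub_mult_le by auto
  have "real s \<le> (1 - \<delta>) * N / N0" unfolding s_def using \<delta> by simp
  then have sN0: "real s * N0 \<le> (1 - \<delta>) * N" using N0(1) by (simp add: pos_le_divide_eq)
  moreover have "(1 - \<delta>) * N \<le> N" using \<delta> by (simp add: mult_left_le_one_le)
  ultimately have sN0_le: "s * N0 \<le> N" by (simp flip: of_nat_mult)
  have rem: "2 \<le> real E - real s * E0" "real E - real s * E0 \<le> d * (real N - real s * N0)"
    using remainder_bounds[OF \<rho> \<delta> _ sN0] dev N(1) unfolding \<eta> by auto
  then have sE0_le: "s * E0 \<le> E" by (simp flip: of_nat_mult)
  have "real (E - s * E0) = real E - real s * E0" "real (d * (N - s * N0)) = d * (real N - real s * N0)"
    using sE0_le sN0_le by (simp_all add: of_nat_diff)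
  then have "2 \<le> E - s * E0" "E - s * E0 \<le> d * (N - s * N0)" using rem by linarith+
  then have "c N0 E0 ^ s \<le> c N E" using power_le_of_remainder sN0_le sE0_le by blast
  then have "real (c N0 E0) ^ s \<le> real (c N E)" by (metis of_nat_le_iff of_nat_power)
  moreover have "0 < real (c N0 E0) ^ s" using N0(2) by simp
  ultimately have "ln (real (c N0 E0) ^ s) \<le> ln (c N E)" by (meson less_le_trans ln_le_cancel_iff)
  then show ?thesis using N0(2) unfolding s_def by (simp add: ln_realpow)
qed

definition rate_set :: "real \<Rightarrow> real \<Rightarrow> real set" where
  "rate_set \<rho> \<eta> =
     {ln (c N E) / N | N E. 0 < N \<and> 1 \<le> c N E \<and> \<bar>real E / real N - \<rho>\<bar> < \<eta>}"

text \<open>The upper limit of ln (c N E) / N as N \<rightarrow> \<infinity> with E / N \<rightarrow> \<rho>.\<close>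

definition growth_rate :: "real \<Rightarrow> real" where
  "growth_rate \<rho> = Inf ((\<lambda>\<eta>. Sup (rate_set \<rho> \<eta>)) ` {0<..})"

lemma rate_set_nonempty:
  fixes \<rho> \<eta> :: real
  assumes \<rho>: "0 < \<rho>" "\<rho> < d" and \<eta>: "0 < \<eta>"
  shows "rate_set \<rho> \<eta> \<noteq> {}"
proof -
  define N where "N = nat \<lceil>1 / \<eta> + 3 / \<rho>\<rceil> + 1"
  have "1 / \<eta> + 3 / \<rho> \<le> real (nat \<lceil>1 / \<eta> + 3 / \<rho>\<rceil>)" by (rule real_nat_ceiling_ge)
  moreover have "0 < 1 / \<eta>" "0 < 3 / \<rho>" using \<eta> \<rho> by auto
  ultimately have N_gt: "1 / \<eta> < N" "3 / \<rho> < N" unfolding N_def by linarith+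
  have N0: "0 < N" unfolding N_def by simp
  define E where "E = nat \<lfloor>\<rho> * N\<rfloor>"
  have "3 < \<rho> * N" using N_gt \<rho> by (simp add: divide_less_eq mult.commute)
  then have E: "real E \<le> \<rho> * N" "\<rho> * N - 1 < real E" "2 \<le> E" unfolding E_def by linarith+
  have "\<rho> * N \<le> real d * N" using \<rho> by (intro mult_right_mono) auto
  then have "E \<le> d * N" using E(1) by (simp flip: of_nat_mult)
  then have "1 \<le> c N E" using one_le E(3) by blast
  have "\<bar>real E / real N - \<rho>\<bar> = \<bar>real E - \<rho> * N\<bar> / N" using N0 by (simp add: field_simps)
  also have "\<dots> \<le> 1 / N" using E N0 by (intro divide_right_mono) auto
  also have "\<dots> < \<eta>" using N_gt \<eta> N0 by (simp add: divide_less_eq mult.commute)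
  finally have "ln (c N E) / N \<in> rate_set \<rho> \<eta>" unfolding rate_set_def using N0 \<open>1 \<le> c N E\<close> by blast
  then show ?thesis by blast
qed

lemma rate_set_bounds:
  assumes "x \<in> rate_set \<rho> \<eta>"
  shows "0 \<le> x" "x \<le> ln b"
proof -
  obtain N E where x: "x = ln (c N E) / N" and N: "0 < N" "1 \<le> c N E"
    using assms unfolding rate_set_def by blast
  show "0 \<le> x" unfolding x using N by simp
  have "ln (c N E) \<le> ln (b ^ N)" using N le_power[of N E] by (subst ln_le_cancel_iff) auto
  also have "\<dots> = N * ln b" using one_le_base by (simp add: ln_realpow)
  finally show "x \<le> ln b" unfolding x using N by (simp add: divide_le_eq mult.commute)
qed

lemma bdd_above_rate_set: "bdd_above (rate_set \<rho> \<eta>)"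
  using rate_set_bounds(2) by (meson bdd_aboveI)

lemma ln_div_ge_rate:
  fixes \<rho> \<delta> \<eta> :: real
  assumes \<rho>: "0 < \<rho>" "\<rho> < d" and \<delta>: "0 < \<delta>" "\<delta> < 1"
    and \<eta>: "\<eta> = \<delta> * min \<rho> (d - \<rho>) / 4"
    and N0: "0 < N0" "1 \<le> c N0 E0" "\<bar>real E0 / real N0 - \<rho>\<bar> < \<eta>"
    and N: "4 / (\<rho> * \<delta>) \<le> N" "\<bar>real E / real N - \<rho>\<bar> < \<eta>"
  shows "(1 - \<delta>) * (ln (c N0 E0) / N0) - ln (c N0 E0) / N \<le> ln (c N E) / N"
proof -
  define X where "X = (1 - \<delta>) * real N / real N0"
  define L where "L = ln (c N0 E0)"
  have "0 < 4 / (\<rho> * \<delta>)" using \<rho> \<delta> by simp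
  then have N_pos: "0 < real N" using N(1) by linarith
  have "X - 1 < real (nat \<lfloor>X\<rfloor>)" using \<delta> unfolding X_def by linarith
  then have "(X - 1) * L \<le> real (nat \<lfloor>X\<rfloor>) * L"
    using N0(2) unfolding L_def by (intro mult_right_mono) auto
  also have "\<dots> \<le> ln (c N E)" unfolding X_def L_def by (rule ln_ge_copies[OF \<rho> \<delta> \<eta> N0 N])
  finally have "(X - 1) * L / N \<le> ln (c N E) / N" using N_pos by (simp add: divide_right_mono)
  moreover have "(X - 1) * L / N = (1 - \<delta>) * (L / N0) - L / N"
    unfolding X_def using N_pos N0(1) by (simp add: field_simps)
  ultimately show ?thesis unfolding L_def by simp
qed

lemma Sup_rate_set_nonneg:
  fixes \<rho> \<eta> :: real
  assumes "0 < \<rho>" "\<rho> < d" "0 < \<eta>"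
  shows "0 \<le> Sup (rate_set \<rho> \<eta>)"
proof -
  obtain x where "x \<in> rate_set \<rho> \<eta>" using rate_set_nonempty[OF assms] by blast
  then show ?thesis using rate_set_bounds(1) cSup_upper[OF _ bdd_above_rate_set] by fastforce
qed

lemma exists_rate_set_greater:
  fixes \<rho> \<eta> v :: real
  assumes "0 < \<rho>" "\<rho> < d" "0 < \<eta>" "v < growth_rate \<rho>"
  shows "\<exists>x\<in>rate_set \<rho> \<eta>. v < x"
proof -
  have "growth_rate \<rho> \<le> Sup (rate_set \<rho> \<eta>)"
    unfolding growth_rate_def using assms(3) Sup_rate_set_nonneg[OF assms(1,2)]
    by (intro cInf_lower bdd_belowI[of _ 0]) auto
  then show ?thesis using less_cSupD[OF rate_set_nonempty[OF assms(1-3)]] assms(4) by auto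
qed

lemma eventually_ln_div_less:
  fixes \<rho> a :: real and Nf Ef :: "'a \<Rightarrow> nat"
  assumes \<rho>: "0 < \<rho>" "\<rho> < d" and a: "growth_rate \<rho> < a"
    and Nf: "filterlim Nf at_top F" and ratio: "((\<lambda>x. real (Ef x) / real (Nf x)) \<longlongrightarrow> \<rho>) F"
  shows "eventually (\<lambda>x. ln (c (Nf x) (Ef x)) / Nf x < a) F"
proof -
  obtain \<eta> where \<eta>: "0 < \<eta>" "Sup (rate_set \<rho> \<eta>) < a"
    using a cInf_lessD[of "(\<lambda>\<eta>. Sup (rate_set \<rho> \<eta>)) ` {0<..}"] unfolding growth_rate_def by auto
  define e where "e = min \<eta> (min (\<rho> / 2) (d - \<rho>))"
  have "0 < e" using \<eta> \<rho> unfolding e_def by auto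
  then have "eventually (\<lambda>x. \<bar>real (Ef x) / real (Nf x) - \<rho>\<bar> < e) F"
    using tendstoD[OF ratio] by (simp add: dist_real_def)
  then show ?thesis using eventually_ge_of_nat_filterlim[OF Nf, of "4 / \<rho>"]
  proof eventually_elim
    case (elim x)
    let ?N = "Nf x" and ?E = "Ef x"
    have "0 < 4 / \<rho>" using \<rho> by simp
    then have N: "0 < real ?N" using elim(2) by linarith
    have "e \<le> \<eta>" "e \<le> \<rho> / 2" "e \<le> d - \<rho>" unfolding e_def by linarith+
    then have ratio_x: "\<rho> / 2 < real ?E / ?N" "real ?E / ?N < d" "\<bar>real ?E / ?N - \<rho>\<bar> < \<eta>"
      using elim(1) by linarith+
    have "2 \<le> \<rho> / 2 * ?N" using elim(2) \<rho> by (simp add: divide_le_eq mult.commute)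
    also have "\<dots> < real ?E" using ratio_x(1) N by (simp add: less_divide_eq)
    finally have "2 \<le> ?E" by linarith
    moreover have "real ?E < d * ?N" using ratio_x(2) N by (simp add: divide_less_eq)
    then have "?E \<le> d * ?N" by (simp flip: of_nat_mult)
    ultimately have "1 \<le> c ?N ?E" using one_le by blast
    then have "ln (c ?N ?E) / ?N \<in> rate_set \<rho> \<eta>" unfolding rate_set_def using N ratio_x(3) by auto
    then have "ln (c ?N ?E) / ?N \<le> Sup (rate_set \<rho> \<eta>)" by (rule cSup_upper[OF _ bdd_above_rate_set])
    then show ?case using \<eta> by linarith
  qed
qed

lemma eventually_ln_div_greater:
  fixes \<rho> a :: real and Nf Ef :: "'a \<Rightarrow> nat"
  assumes \<rho>: "0 < \<rho>" "\<rho> < d" and a: "a < growth_rate \<rho>"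
    and Nf: "filterlim Nf at_top F" and ratio: "((\<lambda>x. real (Ef x) / real (Nf x)) \<longlongrightarrow> \<rho>) F"
  shows "eventually (\<lambda>x. a < ln (c (Nf x) (Ef x)) / Nf x) F"
proof -
  define \<epsilon> where "\<epsilon> = growth_rate \<rho> - a"
  define B where "B = ln b"
  have \<epsilon>: "0 < \<epsilon>" using a unfolding \<epsilon>_def by simp
  have B: "0 \<le> B" unfolding B_def using one_le_base by simp
  define \<delta> where "\<delta> = min (1 / 2) (\<epsilon> / (4 * (B + 1)))"
  have \<delta>: "0 < \<delta>" "\<delta> < 1" unfolding \<delta>_def using \<epsilon> B by auto
  have "\<delta> * B \<le> \<epsilon> / (4 * (B + 1)) * B" unfolding \<delta>_def using B by (intro mult_right_mono) auto
  also have "\<dots> \<le> \<epsilon> / 4" using \<epsilon> B by (simp add: field_simps)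
  finally have \<delta>B: "\<delta> * B \<le> \<epsilon> / 4" .
  define \<eta> where "\<eta> = \<delta> * min \<rho> (d - \<rho>) / 4"
  have \<eta>: "0 < \<eta>" unfolding \<eta>_def using \<delta> \<rho> by auto
  obtain v0 where v0: "v0 \<in> rate_set \<rho> \<eta>" "growth_rate \<rho> - \<epsilon> / 4 < v0"
    using exists_rate_set_greater[OF \<rho> \<eta>, of "growth_rate \<rho> - \<epsilon> / 4"] \<epsilon> by auto
  obtain N0 E0 where v0_eq: "v0 = ln (c N0 E0) / N0"
    and N0: "0 < N0" "1 \<le> c N0 E0" "\<bar>real E0 / real N0 - \<rho>\<bar> < \<eta>"
    using v0(1) unfolding rate_set_def by blast
  have v0_B: "0 \<le> v0" "v0 \<le> B" using rate_set_bounds[OF v0(1)] unfolding B_def by auto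
  have "eventually (\<lambda>x. \<bar>real (Ef x) / real (Nf x) - \<rho>\<bar> < \<eta>) F"
    using tendstoD[OF ratio \<eta>] by (simp add: dist_real_def)
  then show ?thesis
    using eventually_ge_of_nat_filterlim[OF Nf, of "4 / (\<rho> * \<delta>)"]
      eventually_ge_of_nat_filterlim[OF Nf, of "8 * N0 * B / \<epsilon> + 1"]
  proof eventually_elim
    case (elim x)
    let ?N = "Nf x" and ?E = "Ef x"
    have "0 \<le> 8 * N0 * B / \<epsilon>" using \<epsilon> B by simp
    then have N: "0 < real ?N" using elim(3) by linarith
    have "8 * N0 * B / \<epsilon> \<le> ?N" using elim(3) by linarith
    then have "8 * N0 * B \<le> ?N * \<epsilon>" using \<epsilon> by (simp add: divide_le_eq)
    moreover have "v0 * N0 \<le> B * N0" using v0_B by (simp add: mult_right_mono)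
    ultimately have "v0 * N0 \<le> \<epsilon> / 8 * ?N" by (simp add: algebra_simps)
    then have rem: "ln (c N0 E0) / ?N \<le> \<epsilon> / 8" using N N0(1) unfolding v0_eq by (simp add: divide_le_eq)
    have "\<delta> * v0 \<le> \<epsilon> / 4" using mult_left_mono[OF v0_B(2), of \<delta>] \<delta> \<delta>B by linarith
    moreover have "(1 - \<delta>) * v0 - ln (c N0 E0) / ?N \<le> ln (c ?N ?E) / ?N"
      unfolding v0_eq using ln_div_ge_rate[OF \<rho> \<delta> \<eta>_def N0 elim(2,1)] .
    moreover have "(1 - \<delta>) * v0 = v0 - \<delta> * v0" by (simp add: algebra_simps)
    ultimately show ?case using rem v0(2) a unfolding \<epsilon>_def by argo
  qed
qed

theorem tendsto_growth_rate:
  fixes \<rho> :: real and Nf Ef :: "'a \<Rightarrow> nat"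
  assumes "0 < \<rho>" "\<rho> < d"
    and "filterlim Nf at_top F" and "((\<lambda>x. real (Ef x) / real (Nf x)) \<longlongrightarrow> \<rho>) F"
  shows "((\<lambda>x. ln (c (Nf x) (Ef x)) / Nf x) \<longlongrightarrow> growth_rate \<rho>) F"
  by (intro order_tendstoI eventually_ln_div_greater[OF assms(1,2) _ assms(3,4)]
      eventually_ln_div_less[OF assms(1,2) _ assms(3,4)])

end

section \<open>Sets meeting no block exactly once\<close>

text \<open>The sockets 0..<r K are grouped into K consecutive blocks of r sockets, one block per check
  node of degree r.\<close>

definition singleton_free :: "nat \<Rightarrow> nat \<Rightarrow> nat set \<Rightarrow> bool" where
  "singleton_free r K T \<longleftrightarrow> (\<forall>i<K. card {j\<in>T. j div r = i} \<noteq> 1)"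

definition singleton_free_sets :: "nat \<Rightarrow> nat \<Rightarrow> nat \<Rightarrow> nat set set" where
  "singleton_free_sets r K e = {T. T \<subseteq> {..<r * K} \<and> card T = e \<and> singleton_free r K T}"

definition singleton_free_count :: "nat \<Rightarrow> nat \<Rightarrow> nat \<Rightarrow> nat" where
  "singleton_free_count r K e = card (singleton_free_sets r K e)"

lemma finite_singleton_free_sets: "finite (singleton_free_sets r K e)"
  unfolding singleton_free_sets_def by (rule finite_subset[of _ "Pow {..<r * K}"]) auto

lemma singleton_free_count_le_binomial: "singleton_free_count r K e \<le> (r * K) choose e"
proof -
  have "singleton_free_count r K e \<le> card {T. T \<subseteq> {..<r * K} \<and> card T = e}"
    unfolding singleton_free_count_def singleton_free_sets_def
    by (intro card_mono) (auto intro: finite_subset[of _ "Pow {..<r * K}"])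
  then show ?thesis by (simp add: n_subsets)
qed

lemma singleton_free_count_le_power: "real (singleton_free_count r K e) \<le> (2 ^ r) ^ K"
proof -
  have "singleton_free_count r K e \<le> 2 ^ (r * K)"
    using singleton_free_count_le_binomial[of r K e] binomial_le_pow2[of "r * K" e] by linarith
  then show ?thesis by (metis of_nat_le_iff of_nat_numeral of_nat_power power_mult)
qed

lemma singleton_free_shift_union:
  assumes r: "0 < r" and T1: "T1 \<subseteq> {..<r * K1}"
    and sf1: "singleton_free r K1 T1" and sf2: "singleton_free r K2 T2"
  shows "singleton_free r (K1 + K2) (T1 \<union> (\<lambda>j. j + r * K1) ` T2)"
  unfolding singleton_free_def
proof (intro allI impI)
  fix i assume i: "i < K1 + K2"
  let ?U = "T1 \<union> (\<lambda>j. j + r * K1) ` T2"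
  have div_shift: "(j + r * K1) div r = j div r + K1" for j using r by simp
  have T1_div: "j div r < K1" if "j \<in> T1" for j
    using that T1 r by (auto simp: div_less_iff_less_mult mult.commute)
  show "card {j \<in> ?U. j div r = i} \<noteq> 1"
  proof (cases "i < K1")
    case True
    then have "{j \<in> ?U. j div r = i} = {j \<in> T1. j div r = i}" using div_shift by force
    then show ?thesis using sf1 True unfolding singleton_free_def by simp
  next
    case False
    then have "{j \<in> ?U. j div r = i} = (\<lambda>j. j + r * K1) ` {j \<in> T2. j div r = i - K1}"
      using div_shift T1_div by force
    moreover have "i - K1 < K2" using i False by simp
    ultimately show ?thesis using sf2 unfolding singleton_free_def by (simp add: card_image)
  qed
qed

lemma shift_union_in_singleton_free_sets:
  assumes r: "0 < r" and "T1 \<in> singleton_free_sets r K1 e1" "T2 \<in> singleton_free_sets r K2 e2"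
  shows "T1 \<union> (\<lambda>j. j + r * K1) ` T2 \<in> singleton_free_sets r (K1 + K2) (e1 + e2)"
proof -
  have T1: "T1 \<subseteq> {..<r * K1}" "card T1 = e1" "singleton_free r K1 T1"
    and T2: "T2 \<subseteq> {..<r * K2}" "card T2 = e2" "singleton_free r K2 T2"
    using assms(2,3) unfolding singleton_free_sets_def by auto
  have "finite T1" "finite T2" using T1(1) T2(1) finite_subset by auto
  moreover have "T1 \<inter> (\<lambda>j. j + r * K1) ` T2 = {}" using T1(1) by auto
  ultimately have "card (T1 \<union> (\<lambda>j. j + r * K1) ` T2) = e1 + e2"
    using T1(2) T2(2) by (simp add: card_Un_disjoint card_image)
  moreover have "T1 \<union> (\<lambda>j. j + r * K1) ` T2 \<subseteq> {..<r * (K1 + K2)}"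
    using T1(1) T2(1) by (auto simp: algebra_simps)
  ultimately show ?thesis
    unfolding singleton_free_sets_def using singleton_free_shift_union[OF r T1(1,3) T2(3)] by simp
qed

lemma singleton_free_count_supermult:
  assumes r: "0 < r"
  shows "singleton_free_count r K1 e1 * singleton_free_count r K2 e2
    \<le> singleton_free_count r (K1 + K2) (e1 + e2)"
proof -
  let ?A = "singleton_free_sets r K1 e1 \<times> singleton_free_sets r K2 e2"
  define f where "f = (\<lambda>(T1, T2). T1 \<union> (\<lambda>j. j + r * K1) ` (T2 :: nat set))"
  have low: "f (T1, T2) \<inter> {..<r * K1} = T1" and high: "(\<lambda>j. j - r * K1) ` (f (T1, T2) - {..<r * K1}) = T2"
    if "T1 \<subseteq> {..<r * K1}" for T1 T2
  proof -
    show "f (T1, T2) \<inter> {..<r * K1} = T1" using that by (auto simp: f_def)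
    have "f (T1, T2) - {..<r * K1} = (\<lambda>j. j + r * K1) ` T2" using that by (auto simp: f_def)
    then show "(\<lambda>j. j - r * K1) ` (f (T1, T2) - {..<r * K1}) = T2" by (simp add: image_image)
  qed
  have "inj_on f ?A"
  proof (rule inj_onI)
    fix x y assume "x \<in> ?A" "y \<in> ?A" "f x = f y"
    then show "x = y" using low high unfolding singleton_free_sets_def
      by (cases x, cases y) (metis (no_types, lifting) SigmaE mem_Collect_eq)
  qed
  moreover have "f ` ?A \<subseteq> singleton_free_sets r (K1 + K2) (e1 + e2)"
    unfolding f_def using shift_union_in_singleton_free_sets[OF r] by auto
  ultimately have "card (f ` ?A) \<le> singleton_free_count r (K1 + K2) (e1 + e2)"
    unfolding singleton_free_count_def by (intro card_mono finite_singleton_free_sets)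
  moreover have "card (f ` ?A) = card ?A" using \<open>inj_on f ?A\<close> by (rule card_image)
  ultimately show ?thesis unfolding singleton_free_count_def by (simp add: card_cartesian_product)
qed

lemma one_le_singleton_free_count_one:
  assumes "e \<le> r" "e \<noteq> 1"
  shows "1 \<le> singleton_free_count r 1 e"
proof -
  have "{j \<in> {..<e}. j div r = 0} = {..<e}" using assms(1) by auto
  then have "{..<e} \<in> singleton_free_sets r 1 e"
    unfolding singleton_free_sets_def singleton_free_def using assms by auto
  then show ?thesis unfolding singleton_free_count_def using finite_singleton_free_sets
    by (metis card_0_eq empty_iff less_one not_le)
qed

lemma one_le_singleton_free_count:
  assumes r: "3 \<le> r" and e: "e = 0 \<or> 2 \<le> e" "e \<le> r * K"
  shows "1 \<le> singleton_free_count r K e"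
  using e
proof (induction K arbitrary: e)
  case 0
  then have "{} \<in> singleton_free_sets r 0 e" unfolding singleton_free_sets_def singleton_free_def by simp
  then show ?case unfolding singleton_free_count_def using finite_singleton_free_sets
    by (metis card_0_eq empty_iff less_one not_le)
next
  case (Suc K)
  \<comment> \<open>split off the last block, which must not receive exactly one element\<close>
  obtain e1 e2 where split: "e = e1 + e2" "e1 = 0 \<or> 2 \<le> e1" "e1 \<le> r * K" "e2 \<le> r" "e2 \<noteq> 1"
  proof (cases "e \<le> r * K")
    case True
    then show ?thesis using that[of e 0] Suc.prems by simp
  next
    case not_le: False
    show ?thesis
    proof (cases "e - r * K = 1")
      case True
      then have "1 \<le> K" using Suc.prems(1) not_le by (cases K) auto
      then have "3 \<le> r * K" using r by (metis le_trans mult.right_neutral mult_le_mono2)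
      then show ?thesis using that[of "r * K - 1" 2] True not_le r by auto
    next
      case False
      have "r * K = 0 \<or> 2 \<le> r * K" using r by (cases K) auto
      then show ?thesis using that[of "r * K" "e - r * K"] False not_le Suc.prems(2) by auto
    qed
  qed
  have "1 \<le> singleton_free_count r K e1 * singleton_free_count r 1 e2"
    using Suc.IH[OF split(2,3)] one_le_singleton_free_count_one[OF split(4,5)] by (simp add: one_le_mult_iff)
  also have "\<dots> \<le> singleton_free_count r (Suc K) e"
    using singleton_free_count_supermult[of r K e1 1 e2] r split(1) by simp
  finally show ?case .
qed

lemma binomial_supermultiplicative: "supermultiplicative_count (choose) 1 2"
proof
  fix N1 N2 E1 E2 :: nat
  have "(N1 choose E1) * (N2 choose (E1 + E2 - E1)) \<le> (\<Sum>k\<le>E1 + E2. (N1 choose k) * (N2 choose (E1 + E2 - k)))"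
    by (rule member_le_sum) auto
  then show "(N1 choose E1) * (N2 choose E2) \<le> (N1 + N2) choose (E1 + E2)"
    using vandermonde[of N1 N2 "E1 + E2"] by simp
next
  fix N E :: nat
  show "E \<le> 1 * N \<Longrightarrow> 1 \<le> N choose E" by (simp add: Suc_leI)
  show "real (N choose E) \<le> 2 ^ N" by (metis binomial_le_pow2 of_nat_le_iff of_nat_numeral of_nat_power)
qed

lemma singleton_free_count_supermultiplicative:
  assumes "3 \<le> r"
  shows "supermultiplicative_count (singleton_free_count r) r (2 ^ r)"
proof
  show "singleton_free_count r N1 E1 * singleton_free_count r N2 E2
    \<le> singleton_free_count r (N1 + N2) (E1 + E2)" for N1 E1 N2 E2
    using assms by (simp add: singleton_free_count_supermult)
  show "E = 0 \<or> 2 \<le> E \<Longrightarrow> E \<le> r * N \<Longrightarrow> 1 \<le> singleton_free_count r N E" for E N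
    using assms by (rule one_le_singleton_free_count)
qed (rule singleton_free_count_le_power)

section \<open>Images under uniformly random permutations\<close>

lemma exists_permutes_image:
  assumes U: "finite U" and T: "T \<subseteq> U" "T' \<subseteq> U" and card: "card T = card T'"
  shows "\<exists>\<sigma>. \<sigma> permutes U \<and> \<sigma> ` T = T'"
proof -
  have fin: "finite T" "finite T'" using U T finite_subset by auto
  obtain f where f: "bij_betw f T T'" using finite_same_card_bij[OF fin card] by blast
  have card_rest: "card (U - T) = card (U - T')" using card T U fin by (simp add: card_Diff_subset)
  obtain g where g: "bij_betw g (U - T) (U - T')" using finite_same_card_bij[OF _ _ card_rest] U by blast
  define \<sigma> where "\<sigma> = (\<lambda>x. if x \<in> T then f x else if x \<in> U then g x else x)"
  have \<sigma>T: "bij_betw \<sigma> T T'" using f by (subst bij_betw_cong[of _ _ f]) (auto simp: \<sigma>_def)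
  moreover have "bij_betw \<sigma> (U - T) (U - T')" using g by (subst bij_betw_cong[of _ _ g]) (auto simp: \<sigma>_def)
  ultimately have "bij_betw \<sigma> (T \<union> (U - T)) (T' \<union> (U - T'))" by (rule bij_betw_combine) auto
  moreover have "T \<union> (U - T) = U" "T' \<union> (U - T') = U" using T by auto
  ultimately have "bij_betw \<sigma> U U" by simp
  then have "\<sigma> permutes U" by (rule bij_imp_permutes) (use T in \<open>auto simp: \<sigma>_def\<close>)
  then show ?thesis using \<sigma>T by (auto simp: bij_betw_def)
qed

lemma card_permutes_image_eq:
  fixes M :: nat
  assumes "T \<subseteq> {..<M}" "T' \<subseteq> {..<M}" "card T = card T'"
  shows "card {p. p permutes {..<M} \<and> p ` V = T} = card {p. p permutes {..<M} \<and> p ` V = T'}"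
proof -
  have le: "card {p. p permutes {..<M} \<and> p ` V = T} \<le> card {p. p permutes {..<M} \<and> p ` V = T'}"
    if hyps: "T \<subseteq> {..<M}" "T' \<subseteq> {..<M}" "card T = card T'" for T T'
  proof -
    obtain \<sigma> where \<sigma>: "\<sigma> permutes {..<M}" "\<sigma> ` T = T'" using exists_permutes_image[of "{..<M}" T T'] hyps by auto
    have "inj_on ((\<circ>) \<sigma>) {p. p permutes {..<M} \<and> p ` V = T}"
      using permutes_inj[OF \<sigma>(1)] by (metis (no_types, lifting) fun.inj_map_strong inj_eq inj_onI)
    moreover have "(\<circ>) \<sigma> ` {p. p permutes {..<M} \<and> p ` V = T} \<subseteq> {p. p permutes {..<M} \<and> p ` V = T'}"
      using \<sigma> by (auto intro: permutes_compose simp: image_comp[symmetric])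
    moreover have "finite {p. p permutes {..<M} \<and> p ` V = T'}"
      by (rule finite_subset[OF _ finite_permutations[of "{..<M}"]]) auto
    ultimately show ?thesis by (rule card_inj_on_le)
  qed
  show ?thesis using le[OF assms] le[OF assms(2,1) assms(3)[symmetric]] by simp
qed

text \<open>The image of a fixed set of size e under a uniformly random permutation is a uniformly
  random set of size e.\<close>

lemma card_permutes_image_pred:
  assumes V: "V \<subseteq> {..<M}" "card V = e"
  shows "card {p. p permutes {..<M} \<and> P (p ` V)} * (M choose e)
       = card {T. T \<subseteq> {..<M} \<and> card T = e \<and> P T} * fact M"
proof -
  define Ts where "Ts = {T. T \<subseteq> {..<M} \<and> card T = e}"
  define fiber where "fiber T = {p. p permutes {..<M} \<and> p ` V = T}" for T
  define h where "h = card (fiber V)"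
  have fin_Ts: "finite Ts" unfolding Ts_def by (rule finite_subset[of _ "Pow {..<M}"]) auto
  have image_in_Ts: "p ` V \<in> Ts" if "p permutes {..<M}" for p
    using V permutes_image[OF that] permutes_inj[OF that]
    by (auto simp: Ts_def card_image inj_on_subset)
  have card_Union: "card (\<Union> (fiber ` X)) = card X * h" if X: "X \<subseteq> Ts" for X
  proof -
    have "card (\<Union> (fiber ` X)) = (\<Sum>T\<in>X. card (fiber T))"
      using X fin_Ts by (intro card_UN_disjoint)
        (auto simp: fiber_def intro: finite_subset[OF _ finite_permutations[of "{..<M}"]] rev_finite_subset)
    also have "\<dots> = (\<Sum>T\<in>X. h)"
      using X V unfolding h_def fiber_def Ts_def by (intro sum.cong refl card_permutes_image_eq) auto
    finally show ?thesis by simp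
  qed
  have "fact M = card {p. p permutes {..<M}}" by (simp add: card_permutations)
  also have "{p. p permutes {..<M}} = \<Union> (fiber ` Ts)" using image_in_Ts unfolding fiber_def by auto
  also have "card \<dots> = (M choose e) * h" using card_Union[of Ts] by (simp add: Ts_def n_subsets)
  finally have "fact M = (M choose e) * h" .
  moreover have "{p. p permutes {..<M} \<and> P (p ` V)} = \<Union> (fiber ` {T\<in>Ts. P T})"
    using image_in_Ts unfolding fiber_def by auto
  then have "card {p. p permutes {..<M} \<and> P (p ` V)} = card {T\<in>Ts. P T} * h"
    using card_Union by simp
  ultimately show ?thesis unfolding Ts_def by (simp add: conj_assoc)
qed

section \<open>The average stopping set distribution\<close>

definition variable_sockets :: "nat \<Rightarrow> nat \<Rightarrow> nat set \<Rightarrow> nat set" where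
  "variable_sockets l n S = {k \<in> {..<l * n}. k div l \<in> S}"

lemma card_variable_sockets:
  assumes l: "0 < l" and S: "S \<subseteq> {..<n}"
  shows "card (variable_sockets l n S) = l * card S"
proof -
  have in_range: "s * l + i < l * n" if "s < n" "i < l" for s i
  proof -
    have "s * l + l \<le> l * n" using that(1) by (metis Suc_leI mult.commute mult_Suc_right mult_le_mono2 add.commute)
    then show ?thesis using that(2) by linarith
  qed
  have "bij_betw (\<lambda>(s, i). s * l + i) (S \<times> {..<l}) (variable_sockets l n S)"
    by (rule bij_betw_byWitness[where f' = "\<lambda>k. (k div l, k mod l)"])
      (use l S in_range in \<open>auto simp: variable_sockets_def\<close>)
  moreover have "finite S" using S finite_subset by blast
  ultimately show ?thesis by (simp add: bij_betw_same_card[symmetric] card_cartesian_product)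
qed

lemma edges_to_eq_card_image:
  assumes "inj p"
  shows "edges_to l r n p S c = card {j \<in> p ` variable_sockets l n S. j div r = c}"
proof -
  have "{j \<in> p ` variable_sockets l n S. j div r = c} = p ` {k \<in> {..<l * n}. k div l \<in> S \<and> p k div r = c}"
    unfolding variable_sockets_def by auto
  then show ?thesis unfolding edges_to_def using assms by (simp add: card_image inj_on_subset)
qed

text \<open>For a fixed set of m variable nodes and one edge type with degrees (l, r): the probability
  that no check node of that type is joined to the set exactly once.\<close>

definition no_single_edge_prob :: "nat \<Rightarrow> nat \<Rightarrow> nat \<Rightarrow> nat \<Rightarrow> real" where
  "no_single_edge_prob l r n m =
     real (singleton_free_count r (l * n div r) (l * m)) / real ((l * n) choose (l * m))"

lemma card_socket_perms_no_single_edge: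
  assumes l: "0 < l" and r: "0 < r" and dvd: "r dvd l * n" and S: "S \<subseteq> {..<n}"
  shows "real (card {p \<in> socket_perms (l * n). \<forall>c < l * n div r. edges_to l r n p S c \<noteq> 1})
       = no_single_edge_prob l r n (card S) * fact (l * n)"
proof -
  let ?M = "l * n" and ?K = "l * n div r" and ?e = "l * card S"
  have "{p \<in> socket_perms ?M. \<forall>c < ?K. edges_to l r n p S c \<noteq> 1}
      = {p. p permutes {..<?M} \<and> singleton_free r ?K (p ` variable_sockets l n S)}"
    unfolding socket_perms_def singleton_free_def by (auto simp: edges_to_eq_card_image[OF permutes_inj])
  moreover have "{T. T \<subseteq> {..<?M} \<and> card T = ?e \<and> singleton_free r ?K T} = singleton_free_sets r ?K ?e"
    using dvd unfolding singleton_free_sets_def by simp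
  moreover have "variable_sockets l n S \<subseteq> {..<?M}" unfolding variable_sockets_def by auto
  ultimately have eq: "card {p \<in> socket_perms ?M. \<forall>c < ?K. edges_to l r n p S c \<noteq> 1} * (?M choose ?e)
      = singleton_free_count r ?K ?e * fact ?M"
    using card_permutes_image_pred[OF _ card_variable_sockets[OF l S]]
    unfolding singleton_free_count_def by simp
  have "real (card {p \<in> socket_perms ?M. \<forall>c < ?K. edges_to l r n p S c \<noteq> 1}) * real (?M choose ?e)
      = real (singleton_free_count r ?K ?e) * fact ?M"
    using arg_cong[OF eq, of real] by (simp only: of_nat_mult of_nat_fact)
  moreover have "card S \<le> n" using S by (metis card_lessThan card_mono finite_lessThan)
  then have "0 < real (?M choose ?e)" by simp
  ultimately show ?thesis unfolding no_single_edge_prob_def using l by (simp add: field_simps)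
qed

lemma sum_card_filter_swap:
  assumes "finite A" "finite B"
  shows "(\<Sum>a\<in>A. real (card {b\<in>B. Q a b})) = (\<Sum>b\<in>B. real (card {a\<in>A. Q a b}))"
proof -
  have "(\<Sum>a\<in>A. real (card {b\<in>B. Q a b})) = (\<Sum>a\<in>A. \<Sum>b\<in>B. of_bool (Q a b))"
    using assms(2) by (simp add: Int_def)
  also have "\<dots> = (\<Sum>b\<in>B. \<Sum>a\<in>A. of_bool (Q a b))" by (rule sum.swap)
  also have "\<dots> = (\<Sum>b\<in>B. real (card {a\<in>A. Q a b}))" using assms(1) by (simp add: Int_def)
  finally show ?thesis .
qed

lemma finite_socket_perms: "finite (socket_perms m)"
  unfolding socket_perms_def by (rule finite_permutations) simp

lemma card_socket_perms: "card (socket_perms m) = fact m"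
  unfolding socket_perms_def by (simp add: card_permutations)

lemma finite_subsets_card: "finite {S. S \<subseteq> {..<n :: nat} \<and> card S = m}"
  by (rule finite_subset[of _ "Pow {..<n}"]) auto

lemma avg_N1_eq:
  assumes l: "0 < l" and r: "0 < r" and dvd: "r dvd l * n"
  shows "avg_N1 l r n m = real (n choose m) * no_single_edge_prob l r n m"
proof -
  let ?P = "socket_perms (l * n)" and ?Ss = "{S. S \<subseteq> {..<n} \<and> card S = m}"
  let ?Q = "\<lambda>p S. \<forall>c < l * n div r. edges_to l r n p S c \<noteq> 1"
  have "(\<Sum>p\<in>?P. real (card {S. stopping1 l r n p S \<and> card S = m}))
      = (\<Sum>p\<in>?P. real (card {S \<in> ?Ss. ?Q p S}))"
    unfolding stopping1_def by (intro sum.cong refl arg_cong[where f = "\<lambda>X. real (card X)"]) auto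
  also have "\<dots> = (\<Sum>S\<in>?Ss. real (card {p \<in> ?P. ?Q p S}))"
    by (rule sum_card_filter_swap[OF finite_socket_perms finite_subsets_card])
  also have "\<dots> = (\<Sum>S\<in>?Ss. no_single_edge_prob l r n m * fact (l * n))"
    using card_socket_perms_no_single_edge[OF l r dvd] by (intro sum.cong) auto
  finally show ?thesis unfolding avg_N1_def card_socket_perms by (simp add: n_subsets)
qed

lemma avg_N2_eq:
  assumes l: "0 < l1" "0 < l2" and r: "0 < r1" "0 < r2" and dvd: "r1 dvd l1 * n" "r2 dvd l2 * n"
  shows "avg_N2 l1 l2 r1 r2 n m
    = real (n choose m) * no_single_edge_prob l1 r1 n m * no_single_edge_prob l2 r2 n m"
proof -
  let ?P1 = "socket_perms (l1 * n)" and ?P2 = "socket_perms (l2 * n)"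
  let ?Ss = "{S. S \<subseteq> {..<n} \<and> card S = m}"
  let ?Q1 = "\<lambda>p S. \<forall>c < l1 * n div r1. edges_to l1 r1 n p S c \<noteq> 1"
  let ?Q2 = "\<lambda>p S. \<forall>c < l2 * n div r2. edges_to l2 r2 n p S c \<noteq> 1"
  have "(\<Sum>(p1, p2)\<in>?P1 \<times> ?P2. real (card {S. stopping2 l1 l2 r1 r2 n p1 p2 S \<and> card S = m}))
      = (\<Sum>x\<in>?P1 \<times> ?P2. real (card {S \<in> ?Ss. ?Q1 (fst x) S \<and> ?Q2 (snd x) S}))"
    unfolding stopping2_def case_prod_beta
    by (intro sum.cong refl arg_cong[where f = "\<lambda>X. real (card X)"]) auto
  also have "\<dots> = (\<Sum>S\<in>?Ss. real (card {x \<in> ?P1 \<times> ?P2. ?Q1 (fst x) S \<and> ?Q2 (snd x) S}))"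
    using finite_socket_perms by (intro sum_card_filter_swap finite_subsets_card) auto
  also have "\<dots> = (\<Sum>S\<in>?Ss. no_single_edge_prob l1 r1 n m * fact (l1 * n)
                             * (no_single_edge_prob l2 r2 n m * fact (l2 * n)))"
  proof (intro sum.cong refl)
    fix S assume "S \<in> ?Ss"
    then have S: "S \<subseteq> {..<n}" "card S = m" by auto
    have "{x \<in> ?P1 \<times> ?P2. ?Q1 (fst x) S \<and> ?Q2 (snd x) S} = {p \<in> ?P1. ?Q1 p S} \<times> {p \<in> ?P2. ?Q2 p S}"
      by auto
    then show "real (card {x \<in> ?P1 \<times> ?P2. ?Q1 (fst x) S \<and> ?Q2 (snd x) S})
      = no_single_edge_prob l1 r1 n m * fact (l1 * n) * (no_single_edge_prob l2 r2 n m * fact (l2 * n))"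
      using card_socket_perms_no_single_edge[OF l(1) r(1) dvd(1) S(1)]
        card_socket_perms_no_single_edge[OF l(2) r(2) dvd(2) S(1)] S(2)
      by (simp add: card_cartesian_product)
  qed
  finally show ?thesis unfolding avg_N2_def card_socket_perms by (simp add: n_subsets)
qed

section \<open>Growth rates\<close>

abbreviation binomial_growth :: "real \<Rightarrow> real" where
  "binomial_growth \<equiv> supermultiplicative_count.growth_rate (choose)"

abbreviation singleton_free_growth :: "nat \<Rightarrow> real \<Rightarrow> real" where
  "singleton_free_growth r \<equiv> supermultiplicative_count.growth_rate (singleton_free_count r)"

definition type_exponent :: "nat \<Rightarrow> nat \<Rightarrow> real \<Rightarrow> real" where
  "type_exponent l r \<omega> = l / r * singleton_free_growth r (r * \<omega>) - l * binomial_growth \<omega>"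

lemma tendsto_nat_floor_mult_div:
  fixes \<omega> :: real
  assumes "0 < \<omega>"
  shows "((\<lambda>n. real (nat \<lfloor>\<omega> * real n\<rfloor>) / real n) \<longlongrightarrow> \<omega>) at_top"
proof (rule tendsto_sandwich[of "\<lambda>n. \<omega> - 1 / real n" _ _ "\<lambda>n. \<omega>"])
  show "eventually (\<lambda>n. \<omega> - 1 / real n \<le> real (nat \<lfloor>\<omega> * real n\<rfloor>) / real n) at_top"
    using eventually_gt_at_top[of 0]
  proof eventually_elim
    case (elim n)
    have "\<omega> * n - 1 \<le> real (nat \<lfloor>\<omega> * real n\<rfloor>)" using assms by linarith
    then have "(\<omega> * n - 1) / n \<le> real (nat \<lfloor>\<omega> * real n\<rfloor>) / n" by (simp add: divide_right_mono)
    then show ?case using elim by (simp add: diff_divide_distrib)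
  qed
  show "eventually (\<lambda>n. real (nat \<lfloor>\<omega> * real n\<rfloor>) / real n \<le> \<omega>) at_top"
    using eventually_gt_at_top[of 0]
  proof eventually_elim
    case (elim n)
    have "real (nat \<lfloor>\<omega> * real n\<rfloor>) \<le> \<omega> * n" using assms by simp
    then show ?case using elim by (simp add: divide_le_eq)
  qed
  show "((\<lambda>n. \<omega> - 1 / real n) \<longlongrightarrow> \<omega>) at_top"
    using tendsto_diff[OF tendsto_const[of \<omega>] lim_const_over_n[of "1::real"]] by simp
qed simp

lemma tendsto_ln_binomial:
  fixes F :: "nat filter" and \<omega> :: real
  assumes l: "0 < l" and \<omega>: "0 < \<omega>" "\<omega> < 1" and F: "F \<le> at_top"
  shows "((\<lambda>n. ln ((l * n) choose (l * nat \<lfloor>\<omega> * n\<rfloor>)) / n) \<longlongrightarrow> l * binomial_growth \<omega>) F"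
proof -
  have lim: "filterlim (\<lambda>n. l * n) at_top F" using filterlim_mono[OF mult_nat_left_at_top[OF l] order_refl F] .
  have "((\<lambda>n. real (l * nat \<lfloor>\<omega> * n\<rfloor>) / real (l * n)) \<longlongrightarrow> \<omega>) F"
    using tendsto_mono[OF F tendsto_nat_floor_mult_div[OF \<omega>(1)]] l by simp
  from supermultiplicative_count.tendsto_growth_rate[OF binomial_supermultiplicative _ _ lim this]
  have "((\<lambda>n. ln ((l * n) choose (l * nat \<lfloor>\<omega> * n\<rfloor>)) / real (l * n)) \<longlongrightarrow> binomial_growth \<omega>) F"
    using \<omega> by simp
  then have "((\<lambda>n. l * (ln ((l * n) choose (l * nat \<lfloor>\<omega> * n\<rfloor>)) / (l * n))) \<longlongrightarrow> l * binomial_growth \<omega>) F"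
    by (rule tendsto_mult_left)
  then show ?thesis using l by simp
qed

lemma tendsto_ln_singleton_free_count:
  fixes F :: "nat filter" and \<omega> :: real
  assumes l: "0 < l" and r: "3 \<le> r" and \<omega>: "0 < \<omega>" "\<omega> < 1" and F: "F \<le> at_top"
    and dvd: "eventually (\<lambda>n. r dvd l * n) F"
  shows "((\<lambda>n. ln (singleton_free_count r (l * n div r) (l * nat \<lfloor>\<omega> * n\<rfloor>)) / n)
           \<longlongrightarrow> l / r * singleton_free_growth r (r * \<omega>)) F"
proof -
  let ?K = "\<lambda>n. l * n div r" and ?m = "\<lambda>n. nat \<lfloor>\<omega> * real n\<rfloor>"
  have r0: "0 < r" using r by simp
  have K_eq: "real (?K n) = l * n / r" if "r dvd l * n" for n using that by (simp add: real_of_nat_div)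
  have "filterlim ?K at_top at_top"
    by (rule filterlim_compose[OF filterlim_at_top_div_const_nat[OF r0] mult_nat_left_at_top[OF l]])
  then have K_lim: "filterlim ?K at_top F" using filterlim_mono F by blast
  have "((\<lambda>n. r * (real (?m n) / real n)) \<longlongrightarrow> r * \<omega>) F"
    by (intro tendsto_mult_left tendsto_mono[OF F tendsto_nat_floor_mult_div[OF \<omega>(1)]])
  moreover have "eventually (\<lambda>n. r * (real (?m n) / real n) = real (l * ?m n) / real (?K n)) F"
    using dvd by eventually_elim (use l r0 K_eq in simp)
  ultimately have "((\<lambda>n. real (l * ?m n) / real (?K n)) \<longlongrightarrow> r * \<omega>) F"
    using tendsto_cong by fastforce
  then have "((\<lambda>n. ln (singleton_free_count r (?K n) (l * ?m n)) / ?K n) \<longlongrightarrow> singleton_free_growth r (r * \<omega>)) F"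
    using supermultiplicative_count.tendsto_growth_rate[OF singleton_free_count_supermultiplicative[OF r] _ _ K_lim]
      \<omega> r0 by simp
  then have "((\<lambda>n. l / r * (ln (singleton_free_count r (?K n) (l * ?m n)) / ?K n))
      \<longlongrightarrow> l / r * singleton_free_growth r (r * \<omega>)) F"
    by (rule tendsto_mult_left)
  moreover have "eventually (\<lambda>n. l / r * (ln (singleton_free_count r (?K n) (l * ?m n)) / ?K n)
      = ln (singleton_free_count r (?K n) (l * ?m n)) / n) F"
    using dvd by eventually_elim (use l r0 K_eq in simp)
  ultimately show ?thesis using tendsto_cong by fastforce
qed

lemma eventually_le_nat_floor_mult:
  fixes \<omega> :: real
  assumes "0 < \<omega>"
  shows "eventually (\<lambda>n. k \<le> nat \<lfloor>\<omega> * real n\<rfloor>) at_top"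
  using eventually_ge_at_top[of "nat \<lceil>(k + 1) / \<omega>\<rceil>"]
proof eventually_elim
  case (elim n)
  then have "(k + 1) / \<omega> \<le> n" by linarith
  then have "k + 1 \<le> \<omega> * n" using assms by (simp add: divide_le_eq mult.commute)
  then show ?case by linarith
qed

lemma nat_floor_mult_le:
  fixes \<omega> :: real
  assumes "0 \<le> \<omega>" "\<omega> \<le> 1"
  shows "nat \<lfloor>\<omega> * real n\<rfloor> \<le> n"
proof -
  have "real (nat \<lfloor>\<omega> * real n\<rfloor>) \<le> \<omega> * n" using assms by simp
  also have "\<dots> \<le> n" using assms by (simp add: mult_left_le_one_le)
  finally show ?thesis by simp
qed

lemma no_single_edge_prob_pos:
  assumes l: "0 < l" and r: "3 \<le> r" and dvd: "r dvd l * n" and m: "2 \<le> m" "m \<le> n"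
  shows "0 < no_single_edge_prob l r n m"
proof -
  have "1 * 2 \<le> l * m" using l m(1) by (intro mult_le_mono) auto
  then have "2 \<le> l * m" by simp
  moreover have "l * m \<le> r * (l * n div r)" using dvd m(2) by simp
  ultimately have "1 \<le> singleton_free_count r (l * n div r) (l * m)"
    by (intro one_le_singleton_free_count[OF r]) auto
  then show ?thesis unfolding no_single_edge_prob_def using m(2) by simp
qed

lemma tendsto_ln_no_single_edge_prob:
  fixes F :: "nat filter" and \<omega> :: real
  assumes l: "0 < l" and r: "3 \<le> r" and \<omega>: "0 < \<omega>" "\<omega> < 1" and F: "F \<le> at_top"
    and dvd: "eventually (\<lambda>n. r dvd l * n) F"
  shows "((\<lambda>n. ln (no_single_edge_prob l r n (nat \<lfloor>\<omega> * n\<rfloor>)) / n) \<longlongrightarrow> type_exponent l r \<omega>) F"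
proof -
  let ?m = "\<lambda>n. nat \<lfloor>\<omega> * real n\<rfloor>"
  have ev: "eventually (\<lambda>n. ln (singleton_free_count r (l * n div r) (l * ?m n)) / n
      - ln ((l * n) choose (l * ?m n)) / n = ln (no_single_edge_prob l r n (?m n)) / n) F"
    using dvd filter_leD[OF F eventually_le_nat_floor_mult[OF \<omega>(1), of 2]]
  proof eventually_elim
    case (elim n)
    have "?m n \<le> n" using \<omega> by (simp add: nat_floor_mult_le)
    then have "0 < no_single_edge_prob l r n (?m n)" using no_single_edge_prob_pos[OF l r elim(1,2)] by simp
    moreover have "0 < real ((l * n) choose (l * ?m n))" using \<open>?m n \<le> n\<close> by simp
    ultimately have "0 < real (singleton_free_count r (l * n div r) (l * ?m n))"
      unfolding no_single_edge_prob_def by (simp add: zero_less_divide_iff)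
    then show ?case using \<open>?m n \<le> n\<close> unfolding no_single_edge_prob_def
      by (simp add: ln_div diff_divide_distrib)
  qed
  with tendsto_diff[OF tendsto_ln_singleton_free_count[OF l r \<omega> F dvd] tendsto_ln_binomial[OF l \<omega> F]]
  show ?thesis unfolding type_exponent_def by (rule tendsto_cong[THEN iffD1, rotated])
qed

lemma tendsto_ln_binomial_times:
  fixes F :: "nat filter" and \<omega> :: real and f :: "nat \<Rightarrow> nat \<Rightarrow> real"
  assumes \<omega>: "0 < \<omega>" "\<omega> < 1" and F: "F \<le> at_top"
    and pos: "eventually (\<lambda>n. \<forall>m. 2 \<le> m \<and> m \<le> n \<longrightarrow> 0 < f n m) F"
    and tendsto: "((\<lambda>n. ln (f n (nat \<lfloor>\<omega> * n\<rfloor>)) / n) \<longlongrightarrow> L) F"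
  shows "((\<lambda>n. ln (real (n choose nat \<lfloor>\<omega> * n\<rfloor>) * f n (nat \<lfloor>\<omega> * n\<rfloor>)) / n)
           \<longlongrightarrow> binomial_growth \<omega> + L) F"
proof -
  let ?m = "\<lambda>n. nat \<lfloor>\<omega> * real n\<rfloor>"
  have ev: "eventually (\<lambda>n. ln (n choose ?m n) / n + ln (f n (?m n)) / n
      = ln (real (n choose ?m n) * f n (?m n)) / n) F"
    using pos filter_leD[OF F eventually_le_nat_floor_mult[OF \<omega>(1), of 2]]
  proof eventually_elim
    case (elim n)
    have "?m n \<le> n" using \<omega> by (simp add: nat_floor_mult_le)
    then have "0 < f n (?m n)" "0 < real (n choose ?m n)" using elim by auto
    then show ?case by (simp add: ln_mult add_divide_distrib)
  qed
  have "((\<lambda>n. ln (n choose ?m n) / n) \<longlongrightarrow> binomial_growth \<omega>) F"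
    using tendsto_ln_binomial[of 1, OF _ \<omega> F] by simp
  from tendsto_cong[THEN iffD1, OF ev tendsto_add[OF this tendsto]] show ?thesis .
qed

lemma admissible_n_le_at_top: "admissible_n l1 l2 r1 r2 \<le> at_top"
  unfolding admissible_n_def by (rule inf_le1)

lemma eventually_dvd_admissible_n:
  "eventually (\<lambda>n. r1 dvd l1 * n \<and> r2 dvd l2 * n) (admissible_n l1 l2 r1 r2)"
  unfolding admissible_n_def eventually_inf_principal by simp

lemma tendsto_ln_avg_N1:
  fixes F :: "nat filter" and \<omega> :: real
  assumes l: "0 < l" and r: "3 \<le> r" and \<omega>: "0 < \<omega>" "\<omega> < 1" and F: "F \<le> at_top"
    and dvd: "eventually (\<lambda>n. r dvd l * n) F"
  shows "((\<lambda>n. ln (avg_N1 l r n (nat \<lfloor>\<omega> * real n\<rfloor>)) / real n)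
           \<longlongrightarrow> binomial_growth \<omega> + type_exponent l r \<omega>) F"
proof -
  let ?m = "\<lambda>n. nat \<lfloor>\<omega> * real n\<rfloor>"
  have pos: "eventually (\<lambda>n. \<forall>m. 2 \<le> m \<and> m \<le> n \<longrightarrow> 0 < no_single_edge_prob l r n m) F"
    using dvd by eventually_elim (use no_single_edge_prob_pos[OF l r] in blast)
  have "eventually (\<lambda>n. ln (real (n choose ?m n) * no_single_edge_prob l r n (?m n)) / n
      = ln (avg_N1 l r n (?m n)) / n) F"
    using dvd by eventually_elim (use l r avg_N1_eq in simp)
  from tendsto_cong[THEN iffD1, OF this
      tendsto_ln_binomial_times[OF \<omega> F pos tendsto_ln_no_single_edge_prob[OF l r \<omega> F dvd]]]
  show ?thesis .
qed

lemma tendsto_ln_avg_N2: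
  fixes F :: "nat filter" and \<omega> :: real
  assumes l: "0 < l1" "0 < l2" and r: "3 \<le> r1" "3 \<le> r2" and \<omega>: "0 < \<omega>" "\<omega> < 1"
    and F: "F \<le> at_top" and dvd: "eventually (\<lambda>n. r1 dvd l1 * n) F" "eventually (\<lambda>n. r2 dvd l2 * n) F"
  shows "((\<lambda>n. ln (avg_N2 l1 l2 r1 r2 n (nat \<lfloor>\<omega> * real n\<rfloor>)) / real n)
           \<longlongrightarrow> binomial_growth \<omega> + (type_exponent l1 r1 \<omega> + type_exponent l2 r2 \<omega>)) F"
proof -
  let ?m = "\<lambda>n. nat \<lfloor>\<omega> * real n\<rfloor>" and ?p = "\<lambda>n m. no_single_edge_prob l1 r1 n m * no_single_edge_prob l2 r2 n m"
  have pos: "eventually (\<lambda>n. \<forall>m. 2 \<le> m \<and> m \<le> n \<longrightarrow>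
      0 < no_single_edge_prob l1 r1 n m \<and> 0 < no_single_edge_prob l2 r2 n m) F"
    using dvd by eventually_elim (use no_single_edge_prob_pos[OF l(1) r(1)] no_single_edge_prob_pos[OF l(2) r(2)] in simp)
  have "eventually (\<lambda>n. ln (no_single_edge_prob l1 r1 n (?m n)) / n + ln (no_single_edge_prob l2 r2 n (?m n)) / n
      = ln (?p n (?m n)) / n) F"
    using pos filter_leD[OF F eventually_le_nat_floor_mult[OF \<omega>(1), of 2]]
  proof eventually_elim
    case (elim n)
    have "?m n \<le> n" using \<omega> by (simp add: nat_floor_mult_le)
    then have "0 < no_single_edge_prob l1 r1 n (?m n)" "0 < no_single_edge_prob l2 r2 n (?m n)"
      using elim by auto
    then show ?case by (simp add: ln_mult add_divide_distrib)
  qed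
  from tendsto_cong[THEN iffD1, OF this tendsto_add[OF tendsto_ln_no_single_edge_prob[OF l(1) r(1) \<omega> F dvd(1)]
        tendsto_ln_no_single_edge_prob[OF l(2) r(2) \<omega> F dvd(2)]]]
  have lim: "((\<lambda>n. ln (?p n (?m n)) / n) \<longlongrightarrow> type_exponent l1 r1 \<omega> + type_exponent l2 r2 \<omega>) F" .
  have pos12: "eventually (\<lambda>n. \<forall>m. 2 \<le> m \<and> m \<le> n \<longrightarrow> 0 < ?p n m) F"
    using pos by eventually_elim simp
  have "eventually (\<lambda>n. ln (real (n choose ?m n) * ?p n (?m n)) / n
      = ln (avg_N2 l1 l2 r1 r2 n (?m n)) / n) F"
    using dvd by eventually_elim (use l r avg_N2_eq in \<open>simp add: mult.assoc\<close>)
  from tendsto_cong[THEN iffD1, OF this tendsto_ln_binomial_times[OF \<omega> F pos12 lim]] show ?thesis .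
qed

lemma type_exponent_add: "type_exponent l1 r \<omega> + type_exponent l2 r \<omega> = type_exponent (l1 + l2) r \<omega>"
  unfolding type_exponent_def by (simp add: algebra_simps add_divide_distrib)

theorem growth_rate_avg_N2_eq_avg_N1:
  fixes l1 l2 r :: nat and \<omega> :: real
  assumes l: "0 < l1" "0 < l2" and r: "3 \<le> r" and \<omega>: "0 < \<omega>" "\<omega> < 1"
  defines "F \<equiv> admissible_n l1 l2 r r"
  shows "\<exists>G. ((\<lambda>n. ln (avg_N2 l1 l2 r r n (nat \<lfloor>\<omega> * real n\<rfloor>)) / real n) \<longlongrightarrow> G) F
           \<and> ((\<lambda>n. ln (avg_N1 (l1 + l2) r n (nat \<lfloor>\<omega> * real n\<rfloor>)) / real n) \<longlongrightarrow> G) F"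
proof -
  have F: "F \<le> at_top" unfolding F_def by (rule admissible_n_le_at_top)
  have dvd: "eventually (\<lambda>n. r dvd l1 * n) F" "eventually (\<lambda>n. r dvd l2 * n) F"
    "eventually (\<lambda>n. r dvd (l1 + l2) * n) F"
    using eventually_dvd_admissible_n[of r l1 r l2] unfolding F_def
    by (auto elim: eventually_mono simp: add_mult_distrib)
  have "((\<lambda>n. ln (avg_N1 (l1 + l2) r n (nat \<lfloor>\<omega> * real n\<rfloor>)) / real n)
      \<longlongrightarrow> binomial_growth \<omega> + (type_exponent l1 r \<omega> + type_exponent l2 r \<omega>)) F"
    unfolding type_exponent_add using l by (intro tendsto_ln_avg_N1[OF _ r \<omega> F dvd(3)]) simp
  then show ?thesis using tendsto_ln_avg_N2[OF l r r \<omega> F dvd(1,2)] by blast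
qed

section \<open>Small stopping sets\<close>

lemma pow_le_3_pow_fact: "real s ^ s \<le> 3 ^ s * fact s"
proof (induction s)
  case 0
  then show ?case by simp
next
  case (Suc s)
  have step: "real (Suc s) ^ s \<le> 3 * real s ^ s"
  proof (cases "s = 0")
    case False
    have "(1 + 1 / real s) ^ s \<le> exp 1" using False by (intro exp_ge_one_plus_x_over_n_power_n) auto
    also have "\<dots> \<le> 3" by (rule exp_le)
    finally have "(1 + 1 / real s) ^ s \<le> 3" .
    moreover have "real (Suc s) ^ s = real s ^ s * (1 + 1 / real s) ^ s"
      using False by (simp add: field_simps flip: power_mult_distrib)
    ultimately show ?thesis
      using mult_left_mono[of "(1 + 1 / real s) ^ s" 3 "real s ^ s"] by (simp add: mult.commute)
  qed simp
  have "real (Suc s) ^ Suc s = real (Suc s) * real (Suc s) ^ s" by simp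
  also have "\<dots> \<le> real (Suc s) * (3 * (3 ^ s * fact s))"
    using step Suc.IH by (intro mult_left_mono) auto
  also have "\<dots> = 3 ^ Suc s * fact (Suc s)" by (simp add: algebra_simps)
  finally show ?case .
qed

lemma binomial_mult_pow_le: "real (n choose k) * real k ^ k \<le> (3 * real n) ^ k"
proof -
  have "real (n choose k) * real k ^ k \<le> real (n choose k) * (3 ^ k * fact k)"
    using pow_le_3_pow_fact[of k] by (intro mult_left_mono) auto
  also have "\<dots> = 3 ^ k * real ((n choose k) * fact k)" by simp
  also have "\<dots> \<le> 3 ^ k * real n ^ k"
    using binomial_fact_pow[of n k] by (intro mult_left_mono) (metis of_nat_le_iff of_nat_power, simp)
  finally show ?thesis by (simp add: power_mult_distrib)
qed

lemma binomial_ratio_le: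
  assumes "A \<le> B"
  shows "real (A choose e) * real B ^ e \<le> real (B choose e) * real A ^ e"
proof (cases "e \<le> A")
  case True
  have prod: "real (n choose e) * fact e = (\<Prod>i = 0..<e. real n - real i)" for n
    by (simp add: binomial_gbinomial gbinomial_mult_fact')
  have "fact e * (real (A choose e) * real B ^ e) = (\<Prod>i = 0..<e. (real A - real i) * real B)"
    using prod[of A] by (simp add: prod.distrib ac_simps)
  also have "\<dots> \<le> (\<Prod>i = 0..<e. (real B - real i) * real A)"
  proof (intro prod_mono conjI)
    fix i assume i: "i \<in> {0..<e}"
    show "0 \<le> (real A - real i) * real B" using i True by auto
    have "real i * real A \<le> real i * real B" using assms by (intro mult_left_mono) auto
    then show "(real A - real i) * real B \<le> (real B - real i) * real A" by (simp add: algebra_simps)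
  qed
  also have "\<dots> = fact e * (real (B choose e) * real A ^ e)"
    using prod[of B] by (simp add: prod.distrib ac_simps)
  finally show ?thesis by (rule mult_left_le_imp_le) simp
qed (simp add: binomial_eq_0)

lemma singleton_free_blocks_le_half:
  assumes r: "0 < r" and "T \<in> singleton_free_sets r K e"
  shows "(\<lambda>j. j div r) ` T \<subseteq> {..<K}" "2 * card ((\<lambda>j. j div r) ` T) \<le> e"
proof -
  let ?J = "(\<lambda>j. j div r) ` T"
  have T: "T \<subseteq> {..<r * K}" "card T = e" "singleton_free r K T"
    using assms(2) unfolding singleton_free_sets_def by auto
  have fin_T: "finite T" using T(1) finite_subset by blast
  show J_sub: "?J \<subseteq> {..<K}" using T(1) r by (auto simp: div_less_iff_less_mult mult.commute)
  have "T = (\<Union>i\<in>?J. {j\<in>T. j div r = i})" by auto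
  moreover have "card (\<Union>i\<in>?J. {j\<in>T. j div r = i}) = (\<Sum>i\<in>?J. card {j\<in>T. j div r = i})"
    by (rule card_UN_disjoint) (use fin_T in auto)
  ultimately have "e = (\<Sum>i\<in>?J. card {j\<in>T. j div r = i})" using T(2) by simp
  also have "\<dots> \<ge> (\<Sum>i\<in>?J. 2)"
  proof (intro sum_mono)
    fix i assume i: "i \<in> ?J"
    then have "card {j\<in>T. j div r = i} \<noteq> 1" using T(3) J_sub unfolding singleton_free_def by auto
    moreover have "{j\<in>T. j div r = i} \<noteq> {}" using i by auto
    then have "card {j\<in>T. j div r = i} \<noteq> 0" using fin_T by simp
    ultimately show "2 \<le> card {j\<in>T. j div r = i}" by linarith
  qed
  finally show "2 * card ?J \<le> e" by simp
qed

text \<open>Every singleton-free e-set is an e-subset of the sockets of at most e div 2 blocks.\<close>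

lemma singleton_free_count_le_sum:
  assumes r: "0 < r"
  shows "singleton_free_count r K e \<le> (\<Sum>i\<le>e div 2. (K choose i) * ((r * i) choose e))"
proof -
  define Js where "Js = {J. J \<subseteq> {..<K} \<and> card J \<le> e div 2}"
  define A where "A J = {T. T \<subseteq> variable_sockets r K J \<and> card T = e}" for J
  have fin_Js: "finite Js" unfolding Js_def by (rule finite_subset[of _ "Pow {..<K}"]) auto
  have sockets_sub: "variable_sockets r K J \<subseteq> {..<r * K}" for J unfolding variable_sockets_def by auto
  have "singleton_free_sets r K e \<subseteq> (\<Union>J\<in>Js. A J)"
  proof
    fix T assume T: "T \<in> singleton_free_sets r K e"
    then have "(\<lambda>j. j div r) ` T \<in> Js" using singleton_free_blocks_le_half[OF r T] unfolding Js_def by auto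
    moreover have "T \<in> A ((\<lambda>j. j div r) ` T)"
      using T unfolding A_def variable_sockets_def singleton_free_sets_def by auto
    ultimately show "T \<in> (\<Union>J\<in>Js. A J)" by blast
  qed
  moreover have "finite (\<Union>J\<in>Js. A J)"
    by (rule finite_subset[of _ "Pow {..<r * K}"]) (use sockets_sub in \<open>auto simp: A_def\<close>)
  ultimately have "singleton_free_count r K e \<le> card (\<Union>J\<in>Js. A J)"
    unfolding singleton_free_count_def by (rule card_mono[rotated])
  also have "\<dots> \<le> (\<Sum>J\<in>Js. card (A J))" by (rule card_UN_le[OF fin_Js])
  also have "\<dots> = (\<Sum>J\<in>Js. (r * card J) choose e)"
  proof (intro sum.cong refl)
    fix J assume "J \<in> Js"
    then have "card (variable_sockets r K J) = r * card J" using card_variable_sockets[OF r] Js_def by auto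
    then show "card (A J) = (r * card J) choose e"
      unfolding A_def using finite_subset[OF sockets_sub] by (simp add: n_subsets)
  qed
  also have "\<dots> = (\<Sum>i\<le>e div 2. \<Sum>J\<in>{J\<in>Js. card J = i}. (r * card J) choose e)"
    by (rule sum.group[symmetric]) (use fin_Js in \<open>auto simp: Js_def\<close>)
  also have "\<dots> = (\<Sum>i\<le>e div 2. (K choose i) * ((r * i) choose e))"
  proof (intro sum.cong refl)
    fix i assume "i \<in> {..e div 2}"
    then have "{J\<in>Js. card J = i} = {J. J \<subseteq> {..<K} \<and> card J = i}" unfolding Js_def by auto
    then show "(\<Sum>J\<in>{J\<in>Js. card J = i}. (r * card J) choose e) = (K choose i) * ((r * i) choose e)"
      by (simp add: n_subsets)
  qed
  finally show ?thesis .
qed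

lemma binomial_block_term_le:
  fixes u :: real
  assumes i: "1 \<le> i" "2 * i \<le> e" and rK: "r * K = M" and riM: "r * i \<le> M" and M: "0 < M"
    and u: "0 \<le> u" "real (r * i) / real M \<le> u / 3"
  shows "real (K choose i) * real ((r * i) choose e) \<le> real (M choose e) * u ^ (e - i)"
proof -
  define x where "x = real (r * i) / real M"
  have x0: "0 \<le> x" unfolding x_def by simp
  have "real ((r * i) choose e) * real M ^ e \<le> real (M choose e) * real (r * i) ^ e"
    by (rule binomial_ratio_le[OF riM])
  then have A: "real ((r * i) choose e) \<le> real (M choose e) * x ^ e"
    using M unfolding x_def by (simp add: field_simps power_divide)
  have "real (K choose i) * real i ^ i \<le> (3 * real K) ^ i" by (rule binomial_mult_pow_le)
  then have B: "real (K choose i) \<le> (3 * real K / real i) ^ i"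
    using i by (simp add: field_simps power_divide)
  have Kx: "3 * real K / real i * x = 3"
    using i M rK unfolding x_def by (simp add: field_simps flip: of_nat_mult)
  have "real (K choose i) * real ((r * i) choose e) \<le> (3 * real K / real i) ^ i * (real (M choose e) * x ^ e)"
    using A B by (intro mult_mono) auto
  also have "\<dots> = real (M choose e) * ((3 * real K / real i * x) ^ i * x ^ (e - i))"
  proof -
    define y where "y = 3 * real K / real i"
    have "x ^ e = x ^ i * x ^ (e - i)" using i by (simp flip: power_add)
    then show ?thesis unfolding y_def[symmetric] by (simp add: power_mult_distrib mult_ac)
  qed
  also have "\<dots> = real (M choose e) * (3 ^ i * x ^ (e - i))" unfolding Kx ..
  also have "\<dots> \<le> real (M choose e) * (3 ^ (e - i) * (u / 3) ^ (e - i))"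
    using i u x0 unfolding x_def by (intro mult_left_mono mult_mono power_increasing power_mono) auto
  also have "\<dots> = real (M choose e) * u ^ (e - i)" by (simp flip: power_mult_distrib)
  finally show ?thesis .
qed

lemma no_single_edge_prob_le_power:
  fixes l r n s :: nat
  defines "e \<equiv> l * s" and "u \<equiv> 3 * real r * real s / (2 * real n)"
  assumes r: "0 < r" and dvd: "r dvd l * n" and e: "1 \<le> e" and rs: "3 * r * s \<le> 2 * n"
  shows "no_single_edge_prob l r n s \<le> real (e div 2 + 1) * u ^ (e - e div 2)"
proof -
  define M where "M = l * n"
  define K where "K = M div r"
  have rK: "r * K = M" unfolding K_def M_def using dvd by simp
  have l: "0 < l" using e unfolding e_def by (cases l) auto
  have "1 \<le> r * s" using r e unfolding e_def by simp
  then have n: "0 < n" using rs by linarith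
  have "s \<le> r * s" using r by simp
  then have "s \<le> n" using rs by linarith
  then have eM: "e \<le> M" unfolding e_def M_def by simp
  have M: "0 < M" using e eM by linarith
  have CM: "0 < real (M choose e)" using eM by simp
  have "real (3 * r * s) \<le> real (2 * n)" using rs by (rule of_nat_mono)
  then have u: "0 < u" "u \<le> 1" unfolding u_def using r n e unfolding e_def by (auto simp: divide_le_eq)
  have term_le: "real (K choose i) * real ((r * i) choose e) \<le> real (M choose e) * u ^ (e - e div 2)"
    if i: "i \<le> e div 2" for i
  proof (cases "i = 0")
    case True
    then show ?thesis using e CM u by (simp add: binomial_eq_0)
  next
    case False
    have "2 * i \<le> e" using i by linarith
    then have "r * (2 * i) \<le> r * e" by simp
    also have "r * e = l * (r * s)" unfolding e_def by simp
    also have "\<dots> \<le> l * (2 * n)" using rs by simp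
    finally have ri: "2 * (r * i) \<le> 2 * M" unfolding M_def by (simp add: mult_ac)
    have "real (2 * (r * i)) \<le> real (r * e)"
      using \<open>r * (2 * i) \<le> r * e\<close> by (intro of_nat_mono) (simp add: mult_ac)
    then have "real (r * i) / real M \<le> real (r * e) / (2 * real M)" using M by (simp add: field_simps)
    also have "\<dots> = u / 3" unfolding u_def e_def M_def using n l by (simp add: field_simps)
    finally have "real (K choose i) * real ((r * i) choose e) \<le> real (M choose e) * u ^ (e - i)"
      using i False ri u by (intro binomial_block_term_le[OF _ _ rK _ M]) auto
    also have "\<dots> \<le> real (M choose e) * u ^ (e - e div 2)"
      using CM u i by (intro mult_left_mono power_decreasing) auto
    finally show ?thesis .
  qed
  have "real (singleton_free_count r K e) \<le> (\<Sum>i\<le>e div 2. real (K choose i) * real ((r * i) choose e))"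
    using singleton_free_count_le_sum[OF r, of K e] by (simp flip: of_nat_mult of_nat_sum)
  also have "\<dots> \<le> (\<Sum>i\<le>e div 2. real (M choose e) * u ^ (e - e div 2))" by (intro sum_mono term_le) simp
  also have "\<dots> = real (e div 2 + 1) * u ^ (e - e div 2) * real (M choose e)" by simp
  finally show ?thesis unfolding no_single_edge_prob_def using CM
    by (simp add: divide_le_eq e_def M_def K_def)
qed

lemma binomial_mult_no_single_edge_prob_le:
  fixes l r n s :: nat
  assumes l: "3 \<le> l" and r: "0 < r" and dvd: "r dvd l * n" and s: "1 \<le> s" and rs: "3 * r * s \<le> 2 * n"
  shows "real (n choose s) * no_single_edge_prob l r n s
    \<le> (2 ^ l * (9 * real r / 2) * sqrt (3 * real r / 2) * sqrt (real s / real n)) ^ s"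
proof -
  define e where "e = l * s"
  define u where "u = 3 * real r * real s / (2 * real n)"
  have "3 * s \<le> e" unfolding e_def using l by simp
  then have e: "1 \<le> e" using s by linarith
  have "1 \<le> r * s" using r s by simp
  then have n: "0 < n" using rs by linarith
  have "real (3 * r * s) \<le> real (2 * n)" using rs by (rule of_nat_mono)
  then have u: "0 < u" "u \<le> 1" unfolding u_def using r n s by (auto simp: divide_le_eq)
  have "real (n choose s) * real s ^ s \<le> (3 * real n) ^ s" by (rule binomial_mult_pow_le)
  then have C: "real (n choose s) \<le> (3 * real n / real s) ^ s" using s by (simp add: field_simps power_divide)
  have "e div 2 + 1 \<le> 2 ^ e" using less_exp[of e] by linarith
  then have two_pow: "real (e div 2 + 1) \<le> (2 ^ l) ^ s" unfolding e_def
    by (metis of_nat_le_iff of_nat_numeral of_nat_power power_mult)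
  \<comment> \<open>this is where l \<ge> 3 enters: the exponent e - e div 2 is at least 3 s / 2\<close>
  have u_pow: "u ^ (e - e div 2) \<le> (sqrt u ^ 3) ^ s"
  proof -
    have "u ^ (e - e div 2) = sqrt u ^ (2 * (e - e div 2))" using u by (simp add: power_mult)
    also have "\<dots> \<le> sqrt u ^ (3 * s)" using \<open>3 * s \<le> e\<close> u by (intro power_decreasing) auto
    finally show ?thesis by (simp add: power_mult)
  qed
  have "no_single_edge_prob l r n s \<le> real (e div 2 + 1) * u ^ (e - e div 2)"
    using no_single_edge_prob_le_power[OF r dvd _ rs] e unfolding e_def u_def by simp
  also have "\<dots> \<le> (2 ^ l) ^ s * (sqrt u ^ 3) ^ s" using two_pow u_pow u by (intro mult_mono) auto
  finally have P: "no_single_edge_prob l r n s \<le> (2 ^ l) ^ s * (sqrt u ^ 3) ^ s" .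
  have "real (n choose s) * no_single_edge_prob l r n s \<le> (3 * real n / real s) ^ s * ((2 ^ l) ^ s * (sqrt u ^ 3) ^ s)"
    using C P by (intro mult_mono) (auto simp: no_single_edge_prob_def)
  also have "\<dots> = (3 * real n / real s * 2 ^ l * sqrt u ^ 3) ^ s" by (simp only: power_mult_distrib mult.assoc)
  also have "3 * real n / real s * 2 ^ l * sqrt u ^ 3
      = 2 ^ l * (9 * real r / 2) * sqrt (3 * real r / 2) * sqrt (real s / real n)"
  proof -
    have "u = 3 * real r / 2 * (real s / real n)" unfolding u_def by simp
    then have "sqrt u = sqrt (3 * real r / 2 * (real s / real n))" by (rule arg_cong)
    then have sqrt_u: "sqrt u = sqrt (3 * real r / 2) * sqrt (real s / real n)" by (simp only: real_sqrt_mult)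
    have A: "3 * real n / real s * u = 9 * real r / 2" unfolding u_def using s n by (simp add: field_simps)
    have "sqrt u ^ 3 = u * sqrt u" using u by (simp add: power3_eq_cube)
    then have "3 * real n / real s * 2 ^ l * sqrt u ^ 3 = 2 ^ l * (3 * real n / real s * u) * sqrt u"
      by (simp only: mult_ac)
    then show ?thesis unfolding A sqrt_u by (simp only: mult_ac)
  qed
  finally show ?thesis .
qed

lemma sum_div_two_pow_le: "(\<Sum>s\<in>{1..S}. real s / 2 ^ s) \<le> 2"
proof -
  have closed_form: "(\<Sum>s<N. real s / 2 ^ s) = 2 - 2 * (real N + 1) / 2 ^ N" for N
  proof (induction N)
    case (Suc N)
    have "(\<Sum>s<Suc N. real s / 2 ^ s) = 2 - 2 * (real N + 1) / 2 ^ N + real N / 2 ^ N"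
      using Suc.IH by simp
    also have "\<dots> = 2 - 2 * (real (Suc N) + 1) / 2 ^ Suc N" by (simp add: field_simps)
    finally show ?case .
  qed simp
  have "(\<Sum>s\<in>{1..S}. real s / 2 ^ s) \<le> (\<Sum>s<Suc S. real s / 2 ^ s)" by (rule sum_mono2) auto
  also have "\<dots> \<le> 2" unfolding closed_form by simp
  finally show ?thesis .
qed

lemma power_le_half_power:
  fixes a :: real
  assumes "0 \<le> a" "a \<le> 1 / 2" "1 \<le> s"
  shows "a ^ s \<le> 2 * a / 2 ^ s"
proof -
  have "a ^ s = a * a ^ (s - 1)" using assms(3) by (simp flip: power_Suc)
  also have "\<dots> \<le> a * (1 / 2) ^ (s - 1)" using assms by (intro mult_left_mono power_mono) auto
  also have "(1 / 2 :: real) ^ (s - 1) = 2 / 2 ^ s" using assms(3) by (cases s) (auto simp: power_one_over)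
  finally show ?thesis by (simp add: mult.commute)
qed

lemma no_single_edge_prob_le_one: "r dvd l * n \<Longrightarrow> no_single_edge_prob l r n m \<le> 1"
  using singleton_free_count_le_binomial[of r "l * n div r" "l * m"]
  by (auto simp: no_single_edge_prob_def divide_le_eq_1)

lemma prob_small_stop2_le_sum:
  "prob_small_stop2 l1 l2 r1 r2 n \<omega> \<le> (\<Sum>s\<in>{1..nat \<lfloor>\<omega> * real n\<rfloor>}. avg_N2 l1 l2 r1 r2 n s)"
proof -
  let ?P = "socket_perms (l1 * n) \<times> socket_perms (l2 * n)" and ?I = "{1..nat \<lfloor>\<omega> * real n\<rfloor>}"
  let ?Q = "\<lambda>x. \<exists>S. S \<noteq> {} \<and> real (card S) \<le> \<omega> * real n \<and> stopping2 l1 l2 r1 r2 n (fst x) (snd x) S"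
  let ?c = "\<lambda>x s. real (card {S. stopping2 l1 l2 r1 r2 n (fst x) (snd x) S \<and> card S = s})"
  define D where "D = real (card (socket_perms (l1 * n)) * card (socket_perms (l2 * n)))"
  have D: "0 < D" unfolding D_def card_socket_perms by simp
  have fin_P: "finite ?P" using finite_socket_perms by simp
  have "of_bool (?Q x) \<le> (\<Sum>s\<in>?I. ?c x s)" for x
  proof (cases "?Q x")
    case True
    then obtain S where S: "S \<noteq> {}" "real (card S) \<le> \<omega> * real n" "stopping2 l1 l2 r1 r2 n (fst x) (snd x) S"
      by blast
    have "finite S" using S(3) finite_subset unfolding stopping2_def by blast
    then have "card S \<in> ?I" using S(1,2) by (auto simp: le_nat_floor card_gt_0_iff Suc_le_eq)
    have "finite {S. stopping2 l1 l2 r1 r2 n (fst x) (snd x) S \<and> card S = card S}"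
      by (rule finite_subset[of _ "Pow {..<n}"]) (auto simp: stopping2_def)
    then have "1 \<le> ?c x (card S)" using S(3) by (auto simp: Suc_le_eq card_gt_0_iff)
    also have "\<dots> \<le> (\<Sum>s\<in>?I. ?c x s)" by (rule member_le_sum) (use \<open>card S \<in> ?I\<close> in auto)
    finally show ?thesis using True by simp
  next
    case False
    have "0 \<le> (\<Sum>s\<in>?I. ?c x s)" by (rule sum_nonneg) simp
    then show ?thesis by (simp only: False of_bool_eq(1))
  qed
  then have "(\<Sum>x\<in>?P. of_bool (?Q x)) \<le> (\<Sum>x\<in>?P. \<Sum>s\<in>?I. ?c x s)" by (rule sum_mono)
  also have "\<dots> = (\<Sum>s\<in>?I. \<Sum>x\<in>?P. ?c x s)" by (rule sum.swap)
  also have "\<dots> = (\<Sum>s\<in>?I. avg_N2 l1 l2 r1 r2 n s * D)"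
    unfolding avg_N2_def D_def[symmetric] using D by (intro sum.cong refl) (simp add: case_prod_beta)
  also have "\<dots> = (\<Sum>s\<in>?I. avg_N2 l1 l2 r1 r2 n s) * D" by (rule sum_distrib_right[symmetric])
  finally have "real (card {x\<in>?P. ?Q x}) \<le> (\<Sum>s\<in>?I. avg_N2 l1 l2 r1 r2 n s) * D"
    using fin_P by (simp add: Int_def)
  moreover have "{x\<in>?P. ?Q x} = {(p1, p2)\<in>?P. \<exists>S. S \<noteq> {} \<and> real (card S) \<le> \<omega> * real n
      \<and> stopping2 l1 l2 r1 r2 n p1 p2 S}" by auto
  ultimately show ?thesis unfolding prob_small_stop2_def D_def[symmetric] using D by (simp add: divide_le_eq)
qed

lemma avg_N2_le_geometric:
  fixes l1 l2 r1 r2 n s :: nat and \<omega> :: real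
  defines "D \<equiv> 2 ^ l1 * (9 * real r1 / 2) * sqrt (3 * real r1 / 2)"
  assumes l1: "3 \<le> l1" and l2: "0 < l2" and r: "0 < r1" "0 < r2"
    and dvd: "r1 dvd l1 * n" "r2 dvd l2 * n"
    and \<omega>: "\<omega> \<le> 1 / (4 * D\<^sup>2)" "\<omega> \<le> 2 / (3 * real r1)" and s1: "1 \<le> s" and s_le: "real s \<le> \<omega> * real n"
  shows "avg_N2 l1 l2 r1 r2 n s \<le> 2 * D * sqrt (1 / real n) * (real s / 2 ^ s)"
proof -
  have D: "0 < D" unfolding D_def using r by simp
  have "real (3 * r1 * s) = 3 * real r1 * real s" by simp
  also have "\<dots> \<le> 3 * real r1 * (2 / (3 * real r1) * real n)"
    using s_le mult_right_mono[OF \<omega>(2), of "real n"] by (intro mult_left_mono) auto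
  also have "\<dots> = real (2 * n)" using r by simp
  finally have rs: "3 * r1 * s \<le> 2 * n" by (simp only: of_nat_le_iff)
  have "1 \<le> r1 * s" using r s1 by simp
  then have n: "0 < n" using rs by linarith
  define a where "a = D * sqrt (real s / real n)"
  have a: "0 \<le> a" unfolding a_def using D by simp
  have "a\<^sup>2 = D\<^sup>2 * (real s / real n)" unfolding a_def by (simp add: power_mult_distrib)
  also have "\<dots> \<le> D\<^sup>2 * \<omega>" using s_le n by (intro mult_left_mono) (auto simp: divide_le_eq mult.commute)
  also have "\<dots> \<le> D\<^sup>2 * (1 / (4 * D\<^sup>2))" using \<omega>(1) by (intro mult_left_mono) auto
  also have "\<dots> = (1 / 2)\<^sup>2" using D by (simp add: power2_eq_square)
  finally have a_half: "a \<le> 1 / 2" using power2_le_imp_le[of a "1 / 2"] by simp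
  have "real s \<le> real s ^ 2" using s1 by (simp add: power2_eq_square)
  then have "sqrt (real s) \<le> real s" using real_sqrt_le_mono[of "real s" "real s ^ 2"] by simp
  then have "sqrt (real s / real n) \<le> real s * sqrt (1 / real n)"
    by (simp add: real_sqrt_divide divide_right_mono)
  then have a_le: "a \<le> D * sqrt (1 / real n) * real s"
    unfolding a_def using mult_left_mono[of _ _ D] D by (simp add: ac_simps)
  have "avg_N2 l1 l2 r1 r2 n s
      = real (n choose s) * no_single_edge_prob l1 r1 n s * no_single_edge_prob l2 r2 n s"
    using l1 l2 r dvd by (intro avg_N2_eq) auto
  also have "\<dots> \<le> real (n choose s) * no_single_edge_prob l1 r1 n s"
    using no_single_edge_prob_le_one[OF dvd(2)]
    by (intro mult_right_le_one_le) (auto simp: no_single_edge_prob_def)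
  also have "\<dots> \<le> a ^ s"
    unfolding a_def D_def by (rule binomial_mult_no_single_edge_prob_le[OF l1 r(1) dvd(1) s1 rs])
  also have "\<dots> \<le> 2 * a / 2 ^ s" by (rule power_le_half_power[OF a a_half s1])
  also have "\<dots> \<le> 2 * (D * sqrt (1 / real n) * real s) / 2 ^ s" using a_le by (simp add: divide_right_mono)
  finally show ?thesis by simp
qed

theorem prob_small_stop2_tendsto_zero:
  fixes l1 l2 r1 r2 :: nat
  assumes l1: "3 \<le> l1" and l2: "0 < l2" and r: "0 < r1" "0 < r2"
  shows "\<exists>\<omega>s>0. ((\<lambda>n. prob_small_stop2 l1 l2 r1 r2 n \<omega>s) \<longlongrightarrow> 0) (admissible_n l1 l2 r1 r2)"
proof -
  define D where "D = 2 ^ l1 * (9 * real r1 / 2) * sqrt (3 * real r1 / 2)"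
  define \<omega>s where "\<omega>s = min (1 / (4 * D\<^sup>2)) (2 / (3 * real r1))"
  have D: "0 < D" unfolding D_def using r by simp
  have \<omega>s: "0 < \<omega>s" "\<omega>s \<le> 1 / (4 * D\<^sup>2)" "\<omega>s \<le> 2 / (3 * real r1)"
    unfolding \<omega>s_def using D r by auto
  have avg_le: "avg_N2 l1 l2 r1 r2 n s \<le> 2 * D * sqrt (1 / real n) * (real s / 2 ^ s)"
    if dvd: "r1 dvd l1 * n" "r2 dvd l2 * n" and s: "s \<in> {1..nat \<lfloor>\<omega>s * real n\<rfloor>}" for n s
  proof -
    have "real s \<le> real (nat \<lfloor>\<omega>s * real n\<rfloor>)" using s by simp
    also have "\<dots> \<le> \<omega>s * real n" using \<omega>s(1) by simp
    finally show ?thesis using avg_N2_le_geometric[OF l1 l2 r dvd, of \<omega>s s, folded D_def] s \<omega>s(2,3) by simp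
  qed
  have bound: "prob_small_stop2 l1 l2 r1 r2 n \<omega>s \<le> 4 * D * sqrt (1 / real n)"
    if dvd: "r1 dvd l1 * n" "r2 dvd l2 * n" for n
  proof -
    let ?I = "{1..nat \<lfloor>\<omega>s * real n\<rfloor>}"
    have "prob_small_stop2 l1 l2 r1 r2 n \<omega>s \<le> (\<Sum>s\<in>?I. avg_N2 l1 l2 r1 r2 n s)"
      by (rule prob_small_stop2_le_sum)
    also have "\<dots> \<le> (\<Sum>s\<in>?I. 2 * D * sqrt (1 / real n) * (real s / 2 ^ s))"
      by (intro sum_mono avg_le[OF dvd])
    also have "\<dots> = 2 * D * sqrt (1 / real n) * (\<Sum>s\<in>?I. real s / 2 ^ s)" by (simp add: sum_distrib_left)
    also have "\<dots> \<le> 2 * D * sqrt (1 / real n) * 2" using D sum_div_two_pow_le by (intro mult_left_mono) auto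
    finally show ?thesis by simp
  qed
  have "((\<lambda>n. 1 / real n) \<longlongrightarrow> 0) at_top" by (rule lim_const_over_n)
  then have "((\<lambda>n. sqrt (1 / real n)) \<longlongrightarrow> sqrt 0) at_top" by (rule tendsto_real_sqrt)
  then have "((\<lambda>n. 4 * D * sqrt (1 / real n)) \<longlongrightarrow> 4 * D * 0) at_top" by (intro tendsto_mult_left) simp
  then have lim: "((\<lambda>n. 4 * D * sqrt (1 / real n)) \<longlongrightarrow> 0) (admissible_n l1 l2 r1 r2)"
    using tendsto_mono[OF admissible_n_le_at_top] by simp
  have "eventually (\<lambda>n. 0 \<le> prob_small_stop2 l1 l2 r1 r2 n \<omega>s) (admissible_n l1 l2 r1 r2)"
    by (simp add: prob_small_stop2_def)
  moreover have "eventually (\<lambda>n. prob_small_stop2 l1 l2 r1 r2 n \<omega>s \<le> 4 * D * sqrt (1 / real n))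
      (admissible_n l1 l2 r1 r2)"
    using eventually_dvd_admissible_n[of r1 l1 r2 l2] by (rule eventually_mono) (use bound in blast)
  ultimately have "((\<lambda>n. prob_small_stop2 l1 l2 r1 r2 n \<omega>s) \<longlongrightarrow> 0) (admissible_n l1 l2 r1 r2)"
    by (rule tendsto_sandwich[OF _ _ tendsto_const lim])
  then show ?thesis using \<omega>s(1) by blast
qed

theorem lemma2:
  fixes l1 l2 r :: nat
  assumes "l1 \<ge> 3" and "l2 \<ge> 1" and "r > 0"
    and "1 - real (l1 + l2) / real r > 0"
  shows "(\<forall>\<omega>::real. 0 < \<omega> \<and> \<omega> < 1 \<longrightarrow>
            (\<exists>G::real.
              ((\<lambda>n. ln (avg_N2 l1 l2 r r n (nat \<lfloor>\<omega> * real n\<rfloor>)) / real n)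
                 \<longlongrightarrow> G) (admissible_n l1 l2 r r)
            \<and> ((\<lambda>n. ln (avg_N1 (l1 + l2) r n (nat \<lfloor>\<omega> * real n\<rfloor>)) / real n)
                 \<longlongrightarrow> G) (admissible_n l1 l2 r r)))
       \<and> (\<exists>\<omega>s::real. \<omega>s > 0 \<and>
            ((\<lambda>n. prob_small_stop2 l1 l2 r r n \<omega>s) \<longlongrightarrow> 0) (admissible_n l1 l2 r r))"
proof -
  have "real (l1 + l2) < real r" using assms(3,4) by (simp add: divide_less_eq)
  then have r: "3 \<le> r" using assms(1,2) by linarith
  have l: "0 < l1" "0 < l2" using assms(1,2) by simp_all
  show ?thesis
    using growth_rate_avg_N2_eq_avg_N1[OF l r] prob_small_stop2_tendsto_zero[OF assms(1) l(2) assms(3) assms(3)]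
    by blast
qed

end
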